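(* Let $A$ be a $[5,1]$ stabilizer tensor and $n,d\ge1$. For any $x\in\mathcal{P}_n$, $x\in S_L(A,n,d)$ if and only if $x$ commutes with every element of $\mathcal{Z}_L(A,n,d)$.
   Context: Pauli operators are considered modulo phases; $\mathcal{P}_n$ denotes the $n$-qubit Pauli group modulo phases. A $[5,1]$ stabilizer tensor is a tensor $A^{s}_{udlr}$ with all indices in $\{0,1\}$ such that the 5-qubit vector $\sum A^{s}_{udlr}|s,u,d,l,r\rangle$ is a stabilizer state; $s$ is the physical leg and $u,d,l,r$ are the virtual legs. Cylindrical stabilizer PEPS: place a copy of $A$ at every site $(i,j)$, $i\in\mathbb{Z}_n$, $j=1,\dots,d$. Contract the up leg of $(i,j)$ with the down leg of $(i+1,j)$ (indices mod $n$), and the right leg of $(i,j)$ with the left leg of $(i,j+1)$ for $j<d$; contract every physical leg with $|+\rangle$. The result is a stabilizer state on the $n$ left legs of column 1 (register $L$) and $n$ right legs of column $d$ (register $R$); $S(A,n,d)$ is its stabilizer group (mod phases). $S_L(A,n,d)\subseteq\mathcal{P}_n$ is the restriction of $S(A,n,d)$ to $L$ (the group of $L$-parts of its elements) and $\mathcal{Z}_L(A,n,d)$ is the center of $S_L(A,n,d)$. *)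

theory Defs
  imports Complex_Main
begin

text \<open>Pauli operators modulo phases on m qubits: p i = (x-bit, z-bit), i.e. X^x Z^z on qubit i;
  identity outside qubits 0..m-1.\<close>
definition paulis :: "nat \<Rightarrow> (nat \<Rightarrow> bool \<times> bool) set" where
  "paulis m = {p. \<forall>i\<ge>m. p i = (False, False)}"

definition pauli_commute :: "nat \<Rightarrow> (nat \<Rightarrow> bool \<times> bool) \<Rightarrow> (nat \<Rightarrow> bool \<times> bool) \<Rightarrow> bool" where
  "pauli_commute m p q \<longleftrightarrow>
     even (card {i \<in> {0..<m}. (fst (p i) \<and> snd (q i)) \<noteq> (snd (p i) \<and> fst (q i))})"

text \<open>Action of the Pauli X^a Z^b on an m-qubit vector f (given by its amplitudes on basis
  states t, where only t 0, ..., t (m-1) matter):  X^a Z^b |s> = (-1)^(b.s) |s xor a>.\<close>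
definition pauli_apply :: "nat \<Rightarrow> (nat \<Rightarrow> bool \<times> bool) \<Rightarrow> ((nat \<Rightarrow> bool) \<Rightarrow> complex)
    \<Rightarrow> (nat \<Rightarrow> bool) \<Rightarrow> complex" where
  "pauli_apply m p f t =
     (-1) ^ card {i \<in> {0..<m}. snd (p i) \<and> (t i \<noteq> fst (p i))}
     * f (\<lambda>i. if i < m \<and> fst (p i) then \<not> t i else t i)"

definition stabilizer_state :: "nat \<Rightarrow> ((nat \<Rightarrow> bool) \<Rightarrow> complex) \<Rightarrow> bool" where
  "stabilizer_state m v \<longleftrightarrow>
     (\<exists>t. v t \<noteq> 0) \<and>
     card {p \<in> paulis m. \<exists>c. \<forall>t. pauli_apply m p v t = c * v t} = 2 ^ m"

text \<open>A tensor A^s_{udlr}, arguments in the order s u d l r, index value 0 = False, 1 = True.\<close>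
type_synonym tensor = "bool \<Rightarrow> bool \<Rightarrow> bool \<Rightarrow> bool \<Rightarrow> bool \<Rightarrow> complex"

definition stabilizer_tensor_51 :: "tensor \<Rightarrow> bool" where
  "stabilizer_tensor_51 A \<longleftrightarrow> stabilizer_state 5 (\<lambda>t. A (t 0) (t 1) (t 2) (t 3) (t 4))"

text \<open>Cylindrical PEPS: sites (i,j), i in Z_n (0..n-1), j in 0..d-1 (column j+1 of the paper).
  Physical indices: set Sp (s i j = ((i,j) \<in> Sp)), contracted with |+> = (|0>+|1>)/sqrt 2.
  Vertical bonds: V; (i,j) \<in> V is the index shared by the up leg of (i,j) and the down leg of
  (i+1 mod n, j).  Horizontal bonds: index hb i j for j = 0..d, shared by the right leg of (i,j-1)
  and the left leg of (i,j); hb i 0 = l i (register L), hb i d = r i (register R),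
  internal ones given by the set H.\<close>
definition peps_state :: "tensor \<Rightarrow> nat \<Rightarrow> nat \<Rightarrow> (nat \<Rightarrow> bool) \<Rightarrow> (nat \<Rightarrow> bool) \<Rightarrow> complex" where
  "peps_state A n d l r =
     (\<Sum>Sp\<in>Pow ({0..<n} \<times> {0..<d}). \<Sum>V\<in>Pow ({0..<n} \<times> {0..<d}).
        \<Sum>H\<in>Pow ({0..<n} \<times> {1..<d}).
        (let hb = (\<lambda>i j. if j = 0 then l i else if j = d then r i else (i, j) \<in> H) in
         \<Prod>(i, j)\<in>{0..<n} \<times> {0..<d}.
           complex_of_real (1 / sqrt 2) *
           A ((i, j) \<in> Sp) ((i, j) \<in> V) (((i + n - 1) mod n, j) \<in> V) (hb i j) (hb i (j + 1))))"

definition S_full :: "tensor \<Rightarrow> nat \<Rightarrow> nat \<Rightarrow> ((nat \<Rightarrow> bool \<times> bool) \<times> (nat \<Rightarrow> bool \<times> bool)) set" where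
  "S_full A n d = {(pL, pR). pL \<in> paulis n \<and> pR \<in> paulis n \<and>
     (\<exists>c. \<forall>l r. pauli_apply n pL (\<lambda>l'. pauli_apply n pR (peps_state A n d l') r) l
                  = c * peps_state A n d l r)}"

definition S_L :: "tensor \<Rightarrow> nat \<Rightarrow> nat \<Rightarrow> (nat \<Rightarrow> bool \<times> bool) set" where
  "S_L A n d = fst ` S_full A n d"

definition Z_L :: "tensor \<Rightarrow> nat \<Rightarrow> nat \<Rightarrow> (nat \<Rightarrow> bool \<times> bool) set" where
  "Z_L A n d = {z \<in> S_L A n d. \<forall>y \<in> S_L A n d. pauli_commute n z y}"

end

(*
  Pauli operators modulo phases on a finite set I of qubits form the F_2-vector space
  (F_2 x F_2)^I, with the commutation form as symplectic form. The stabilizer group of a nonzero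
  vector is isotropic, and the vector is a stabilizer state exactly when this group is Lagrangian.
  Being stabilized by some Lagrangian subgroup (a property shared by the zero vector) survives
  tensor products, relabelling of qubits, and contracting legs with |+> or pairwise into bonds;
  the last is symplectic reduction along the Lagrangian stabilizer group of the projector.
  Hence the PEPS is either zero, where S_L is everything, or a stabilizer state on L and R whose
  stabilizer group S is Lagrangian. An operator on L that commutes with S_L commutes, padded
  with the identity on R, with all of S and so lies in S; thus the commutant of S_L lies in S_L,
  the centre Z_L is that commutant, and x commutes with Z_L iff x lies in the double commutant,
  which is S_L.
*)
theory Submission
  imports Defs "HOL-Library.FuncSet" "HOL-Library.Disjoint_Sets"
begin

section \<open>Paulis modulo phases as a symplectic space\<close>

type_synonym 'v pauli = "'v \<Rightarrow> bool \<times> bool"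

definition pauli_one :: "'v pauli" where
  "pauli_one = (\<lambda>_. (False, False))"

definition pauli_mult :: "'v pauli \<Rightarrow> 'v pauli \<Rightarrow> 'v pauli" where
  "pauli_mult p q = (\<lambda>i. (fst (p i) \<noteq> fst (q i), snd (p i) \<noteq> snd (q i)))"

definition paulis_on :: "'v set \<Rightarrow> 'v pauli set" where
  "paulis_on I = {p. \<forall>i. i \<notin> I \<longrightarrow> p i = (False, False)}"

definition pauli_restrict :: "'v set \<Rightarrow> 'v pauli \<Rightarrow> 'v pauli" where
  "pauli_restrict K p = (\<lambda>i. if i \<in> K then p i else (False, False))"

definition sign :: "'v set \<Rightarrow> ('v \<Rightarrow> bool) \<Rightarrow> complex" where
  "sign K P = (\<Prod>i\<in>K. if P i then -1 else 1)"

definition anticommute_at :: "bool \<times> bool \<Rightarrow> bool \<times> bool \<Rightarrow> bool" where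
  "anticommute_at a b \<longleftrightarrow> (fst a \<and> snd b) \<noteq> (snd a \<and> fst b)"

text \<open>The symplectic form, written multiplicatively as a complex sign so that character sums over it
  can be taken.\<close>
definition symp :: "'v set \<Rightarrow> 'v pauli \<Rightarrow> 'v pauli \<Rightarrow> complex" where
  "symp I p q = sign I (\<lambda>i. anticommute_at (p i) (q i))"

definition commutant :: "'v set \<Rightarrow> 'v pauli set \<Rightarrow> 'v pauli set" where
  "commutant I U = {q \<in> paulis_on I. \<forall>u\<in>U. symp I q u = 1}"

definition pauli_subgroup :: "'v set \<Rightarrow> 'v pauli set \<Rightarrow> bool" where
  "pauli_subgroup I U \<longleftrightarrow>
     U \<subseteq> paulis_on I \<and> pauli_one \<in> U \<and> (\<forall>p\<in>U. \<forall>q\<in>U. pauli_mult p q \<in> U)"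

definition lagrangian :: "'v set \<Rightarrow> 'v pauli set \<Rightarrow> bool" where
  "lagrangian I S \<longleftrightarrow> pauli_subgroup I S \<and> commutant I S = S"

definition set_mult :: "'v pauli set \<Rightarrow> 'v pauli set \<Rightarrow> 'v pauli set" where
  "set_mult A B = {pauli_mult a b | a b. a \<in> A \<and> b \<in> B}"

lemma pauli_mult_commute: "pauli_mult p q = pauli_mult q p"
  by (auto simp: pauli_mult_def)

lemma pauli_mult_assoc: "pauli_mult (pauli_mult p q) r = pauli_mult p (pauli_mult q r)"
  by (auto simp: pauli_mult_def)

lemma pauli_mult_one [simp]: "pauli_mult p pauli_one = p" "pauli_mult pauli_one p = p"
  by (auto simp: pauli_mult_def pauli_one_def)

lemma pauli_mult_self [simp]: "pauli_mult p p = pauli_one"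
  by (auto simp: pauli_mult_def pauli_one_def)

lemma pauli_mult_cancel [simp]: "pauli_mult (pauli_mult p q) q = p"
  by (simp add: pauli_mult_assoc)

lemma pauli_mult_eq_self_iff: "pauli_mult p q = p \<longleftrightarrow> q = pauli_one"
  by (auto simp: pauli_mult_def pauli_one_def fun_eq_iff prod_eq_iff)

lemma pauli_mult_paulis_on: "p \<in> paulis_on I \<Longrightarrow> q \<in> paulis_on I \<Longrightarrow> pauli_mult p q \<in> paulis_on I"
  by (auto simp: pauli_mult_def paulis_on_def)

lemma pauli_one_paulis_on [simp]: "pauli_one \<in> paulis_on I"
  by (auto simp: pauli_one_def paulis_on_def)

lemma paulis_on_mono: "I \<subseteq> J \<Longrightarrow> paulis_on I \<subseteq> paulis_on J"
  by (auto simp: paulis_on_def)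

lemma pauli_restrict_paulis_on: "pauli_restrict K p \<in> paulis_on K"
  by (simp add: pauli_restrict_def paulis_on_def)

lemma pauli_restrict_id: "p \<in> paulis_on K \<Longrightarrow> pauli_restrict K p = p"
  by (auto simp: pauli_restrict_def paulis_on_def)

lemma pauli_restrict_mult:
  "pauli_restrict K (pauli_mult p q) = pauli_mult (pauli_restrict K p) (pauli_restrict K q)"
  by (auto simp: pauli_restrict_def pauli_mult_def)

lemma pauli_restrict_one [simp]: "pauli_restrict K pauli_one = pauli_one"
  by (auto simp: pauli_restrict_def pauli_one_def)

lemma sign_xor: "sign K (\<lambda>i. P i \<noteq> Q i) = sign K P * sign K Q"
  unfolding sign_def prod.distrib[symmetric] by (rule prod.cong) auto

lemma sign_square: "sign K P * sign K P = 1"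
  unfolding sign_def prod.distrib[symmetric] by (rule prod.neutral) auto

lemma sign_nonzero: "sign K P \<noteq> 0"
  using sign_square[of K P] by auto

lemma sign_eq_1: "(\<And>i. i \<in> K \<Longrightarrow> \<not> P i) \<Longrightarrow> sign K P = 1"
  unfolding sign_def by (rule prod.neutral) auto

lemma sign_cong: "(\<And>i. i \<in> K \<Longrightarrow> P i = Q i) \<Longrightarrow> sign K P = sign K Q"
  unfolding sign_def by (rule prod.cong) auto

lemma sign_cases: "sign K P = 1 \<or> sign K P = -1"
proof -
  have "(sign K P - 1) * (sign K P + 1) = 0"
    using sign_square[of K P] by (simp add: algebra_simps)
  then show ?thesis
    by (auto simp: eq_neg_iff_add_eq_0)
qed

lemma sign_split: "finite I \<Longrightarrow> C \<subseteq> I \<Longrightarrow> sign I P = sign (I - C) P * sign C P"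
  unfolding sign_def by (metis finite_subset prod.subset_diff)

lemma sign_union: "finite I \<Longrightarrow> finite J \<Longrightarrow> I \<inter> J = {} \<Longrightarrow> sign (I \<union> J) P = sign I P * sign J P"
  unfolding sign_def by (rule prod.union_disjoint)

lemma sign_reindex: "inj_on \<mu> I \<Longrightarrow> sign (\<mu> ` I) P = sign I (\<lambda>i. P (\<mu> i))"
  unfolding sign_def by (simp add: prod.reindex)

lemma sign_single:
  "finite I \<Longrightarrow> i \<in> I \<Longrightarrow> (\<And>j. j \<in> I \<Longrightarrow> j \<noteq> i \<Longrightarrow> \<not> P j) \<Longrightarrow> sign I P = (if P i then -1 else 1)"
  unfolding sign_def by (subst prod.remove[of I i]) (auto intro!: prod.neutral)

lemma sign_eq_power_card: "finite K \<Longrightarrow> sign K P = (-1) ^ card {i \<in> K. P i}"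
proof -
  assume "finite K"
  then have "sign K P = (\<Prod>i\<in>K \<inter> {i. P i}. -1) * (\<Prod>i\<in>K \<inter> - {i. P i}. 1)"
    unfolding sign_def by (rule prod.If_cases)
  also have "K \<inter> {i. P i} = {i \<in> K. P i}"
    by blast
  finally show ?thesis
    by simp
qed

lemma symp_commute: "symp I p q = symp I q p"
  unfolding symp_def anticommute_at_def by (rule sign_cong) auto

lemma symp_mult_left: "symp I (pauli_mult p q) r = symp I p r * symp I q r"
  unfolding symp_def sign_xor[symmetric]
  by (rule sign_cong) (auto simp: anticommute_at_def pauli_mult_def)

lemma symp_mult_right: "symp I r (pauli_mult p q) = symp I r p * symp I r q"
  using symp_mult_left symp_commute by metis

lemma symp_one [simp]: "symp I pauli_one q = 1" "symp I q pauli_one = 1"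
  unfolding symp_def by (auto intro!: sign_eq_1 simp: anticommute_at_def pauli_one_def)

lemma symp_cases: "symp I p q = 1 \<or> symp I p q = -1"
  unfolding symp_def by (rule sign_cases)

lemma symp_single:
  "finite I \<Longrightarrow> i \<in> I \<Longrightarrow> symp I u (pauli_one(i := x)) = (if anticommute_at (u i) x then -1 else 1)"
  unfolding symp_def by (subst sign_single) (auto simp: pauli_one_def anticommute_at_def)

lemma anticommute_at_X: "anticommute_at a (True, False) \<longleftrightarrow> snd a"
  and anticommute_at_Z: "anticommute_at a (False, True) \<longleftrightarrow> fst a"
  by (auto simp: anticommute_at_def)

lemma symp_superset:
  assumes "finite J" "I \<subseteq> J" "p \<in> paulis_on I"
  shows "symp J p q = symp I p q"
proof -
  have "symp J p q = sign (J - I) (\<lambda>i. anticommute_at (p i) (q i)) * symp I p q"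
    unfolding symp_def by (rule sign_split[OF assms(1,2)])
  also have "sign (J - I) (\<lambda>i. anticommute_at (p i) (q i)) = 1"
    using assms(3) by (intro sign_eq_1) (auto simp: paulis_on_def anticommute_at_def)
  finally show ?thesis
    by simp
qed

lemma symp_restrict_left: "symp I (pauli_restrict I p) q = symp I p q"
  and symp_restrict_right: "symp I p (pauli_restrict I q) = symp I p q"
  unfolding symp_def by (auto intro: sign_cong simp: pauli_restrict_def)

lemma symp_disjoint:
  assumes "p \<in> paulis_on I" "q \<in> paulis_on J" "I \<inter> J = {}"
  shows "symp K p q = 1"
  unfolding symp_def
proof (rule sign_eq_1)
  fix i
  have "p i = (False, False) \<or> q i = (False, False)"
    using assms by (auto simp: paulis_on_def)
  then show "\<not> anticommute_at (p i) (q i)"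
    by (auto simp: anticommute_at_def)
qed

lemma commutant_paulis_on: "commutant I U \<subseteq> paulis_on I"
  by (auto simp: commutant_def)

lemma commutant_subgroup: "pauli_subgroup I (commutant I U)"
  unfolding pauli_subgroup_def commutant_def by (auto simp: pauli_mult_paulis_on symp_mult_left)

lemma commutant_antimono: "A \<subseteq> B \<Longrightarrow> commutant I B \<subseteq> commutant I A"
  by (auto simp: commutant_def)

lemma finite_paulis_on: "finite I \<Longrightarrow> finite (paulis_on I)"
  and card_paulis_on: "finite I \<Longrightarrow> card (paulis_on I) = 4 ^ card I"
proof -
  assume fin: "finite I"
  have bij: "bij_betw (\<lambda>p. restrict p I) (paulis_on I) (PiE I (\<lambda>_. UNIV))"
    by (rule bij_betw_byWitness[where f'="\<lambda>f i. if i \<in> I then f i else (False, False)"])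
      (auto simp: paulis_on_def fun_eq_iff PiE_iff extensional_def)
  have "finite (PiE I (\<lambda>_. UNIV :: (bool \<times> bool) set))"
    using fin by (intro finite_PiE) auto
  then show "finite (paulis_on I)"
    using bij_betw_finite[OF bij] by blast
  have "card (paulis_on I) = card (PiE I (\<lambda>_. UNIV :: (bool \<times> bool) set))"
    using bij_betw_same_card[OF bij] .
  also have "\<dots> = 4 ^ card I"
    using fin
    by (simp add: card_PiE UNIV_Times_UNIV[symmetric] card_cartesian_product del: UNIV_Times_UNIV)
  finally show "card (paulis_on I) = 4 ^ card I" .
qed

lemma finite_pauli_subgroup: "finite I \<Longrightarrow> pauli_subgroup I U \<Longrightarrow> finite U"
  using finite_paulis_on by (auto simp: pauli_subgroup_def intro: finite_subset)

lemma sum_symp_subgroup: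
  assumes "pauli_subgroup I U" "finite U" "x \<in> paulis_on I"
  shows "(\<Sum>u\<in>U. symp I x u) = (if x \<in> commutant I U then of_nat (card U) else 0)"
proof (cases "x \<in> commutant I U")
  case False
  then obtain u0 where u0: "u0 \<in> U" "symp I x u0 = -1"
    using assms(3) symp_cases by (auto simp: commutant_def)
  then have "u0 \<noteq> pauli_one"
    by auto
  have "(\<Sum>u\<in>U. symp I x u) = 0"
    by (rule sum_involution_eq_0[where h="\<lambda>u. pauli_mult u u0"])
      (use assms u0 \<open>u0 \<noteq> pauli_one\<close> in
        \<open>auto simp: pauli_subgroup_def symp_mult_right pauli_mult_eq_self_iff\<close>)
  then show ?thesis
    using False by simp
qed (auto simp: commutant_def)

lemma exists_anticommuting:
  assumes "finite I" "u \<in> paulis_on I" "u \<noteq> pauli_one"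
  obtains x where "x \<in> paulis_on I" "symp I x u = -1"
proof -
  obtain i where i: "u i \<noteq> (False, False)"
    using assms(3) by (auto simp: pauli_one_def)
  then have iI: "i \<in> I"
    using assms(2) by (auto simp: paulis_on_def)
  define x where "x = pauli_one(i := if snd (u i) then (True, False) else (False, True))"
  have "x \<in> paulis_on I"
    using iI by (auto simp: x_def paulis_on_def pauli_one_def)
  moreover have "symp I u x = -1"
    using i
    by (auto simp: x_def symp_single[OF assms(1) iI] anticommute_at_X anticommute_at_Z prod_eq_iff)
  then have "symp I x u = -1"
    by (simp add: symp_commute)
  ultimately show ?thesis
    using that by blast
qed

lemma sum_symp_paulis_on:
  assumes "finite I" "u \<in> paulis_on I"
  shows "(\<Sum>x\<in>paulis_on I. symp I x u)
    = (if u = pauli_one then of_nat (card (paulis_on I)) else 0)"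
proof (cases "u = pauli_one")
  case False
  then obtain x0 where x0: "x0 \<in> paulis_on I" "symp I x0 u = -1"
    using exists_anticommuting assms by blast
  then have "x0 \<noteq> pauli_one"
    by auto
  have "(\<Sum>x\<in>paulis_on I. symp I x u) = 0"
    by (rule sum_involution_eq_0[where h="\<lambda>x. pauli_mult x x0"])
      (use x0 \<open>x0 \<noteq> pauli_one\<close> in
        \<open>auto simp: pauli_mult_paulis_on symp_mult_left pauli_mult_eq_self_iff\<close>)
  then show ?thesis
    using False by simp
qed simp

text \<open>Double counting of the character sum of \<open>symp I x u\<close> over all pairs \<open>(x, u)\<close>.\<close>
lemma card_commutant:
  assumes "finite I" "pauli_subgroup I U"
  shows "card U * card (commutant I U) = card (paulis_on I)"
proof -
  have fV: "finite (paulis_on I)"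
    using finite_paulis_on[OF assms(1)] .
  have fU: "finite U"
    using finite_pauli_subgroup[OF assms] .
  have "(\<Sum>x\<in>paulis_on I. \<Sum>u\<in>U. symp I x u)
      = (\<Sum>x\<in>paulis_on I. if x \<in> commutant I U then of_nat (card U) else 0)"
    by (rule sum.cong) (use sum_symp_subgroup[OF assms(2) fU] in auto)
  also have "\<dots> = of_nat (card U * card (commutant I U))"
    using commutant_paulis_on[of I U] fV by (simp add: sum.If_cases Int_absorb1)
  finally have 1: "(\<Sum>x\<in>paulis_on I. \<Sum>u\<in>U. symp I x u) = of_nat (card U * card (commutant I U))" .
  have "(\<Sum>x\<in>paulis_on I. \<Sum>u\<in>U. symp I x u) = (\<Sum>u\<in>U. \<Sum>x\<in>paulis_on I. symp I x u)"
    by (rule sum.swap)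
  also have "\<dots> = (\<Sum>u\<in>U. if u = pauli_one then of_nat (card (paulis_on I)) else 0)"
    using sum_symp_paulis_on[OF assms(1)] assms(2)
    by (intro sum.cong) (auto simp: pauli_subgroup_def)
  also have "\<dots> = of_nat (card (paulis_on I))"
    using assms(2) fU by (simp add: pauli_subgroup_def)
  finally show ?thesis
    using 1 by (metis of_nat_eq_iff)
qed

lemma commutant_commutant:
  assumes "finite I" "pauli_subgroup I U"
  shows "commutant I (commutant I U) = U"
proof -
  have sub: "U \<subseteq> commutant I (commutant I U)"
    using assms(2) by (auto simp: commutant_def pauli_subgroup_def symp_commute)
  have fin: "finite (commutant I U)"
    by (rule finite_pauli_subgroup[OF assms(1) commutant_subgroup])
  have "pauli_one \<in> commutant I U"
    using commutant_subgroup[of I U] by (simp add: pauli_subgroup_def)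
  then have "card (commutant I U) > 0"
    using fin by (auto simp: card_gt_0_iff)
  moreover have
    "card U * card (commutant I U) = card (commutant I (commutant I U)) * card (commutant I U)"
    using card_commutant[OF assms] card_commutant[OF assms(1) commutant_subgroup[of I U]]
    by (simp add: mult.commute)
  ultimately have "card (commutant I (commutant I U)) = card U"
    by simp
  then show ?thesis
    using sub finite_pauli_subgroup[OF assms(1) commutant_subgroup] by (metis card_subset_eq)
qed

lemma pauli_subgroup_image:
  assumes "pauli_subgroup I U" "h pauli_one = pauli_one"
    "\<And>p q. h (pauli_mult p q) = pauli_mult (h p) (h q)" "\<And>p. h p \<in> paulis_on J"
  shows "pauli_subgroup J (h ` U)"
  using assms unfolding pauli_subgroup_def by (metis image_eqI image_iff image_subsetI)

lemma set_mult_subgroup: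
  assumes "pauli_subgroup I A" "pauli_subgroup I B"
  shows "pauli_subgroup I (set_mult A B)"
  unfolding pauli_subgroup_def
proof (intro conjI ballI)
  show "set_mult A B \<subseteq> paulis_on I"
    using assms unfolding set_mult_def pauli_subgroup_def by (blast intro: pauli_mult_paulis_on)
  have "pauli_one \<in> A" "pauli_one \<in> B" "pauli_one = pauli_mult pauli_one pauli_one"
    using assms by (auto simp: pauli_subgroup_def)
  then show "pauli_one \<in> set_mult A B"
    unfolding set_mult_def by blast
  fix p q
  assume "p \<in> set_mult A B" "q \<in> set_mult A B"
  then obtain a1 b1 a2 b2 where "p = pauli_mult a1 b1" "q = pauli_mult a2 b2"
    "a1 \<in> A" "a2 \<in> A" "b1 \<in> B" "b2 \<in> B"
    by (auto simp: set_mult_def)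
  moreover have "pauli_mult (pauli_mult a1 b1) (pauli_mult a2 b2)
      = pauli_mult (pauli_mult a1 a2) (pauli_mult b1 b2)"
    by (auto simp: pauli_mult_def)
  moreover have "pauli_mult a1 a2 \<in> A" "pauli_mult b1 b2 \<in> B"
    using assms \<open>a1 \<in> A\<close> \<open>a2 \<in> A\<close> \<open>b1 \<in> B\<close> \<open>b2 \<in> B\<close> by (auto simp: pauli_subgroup_def)
  ultimately show "pauli_mult p q \<in> set_mult A B"
    unfolding set_mult_def by blast
qed

lemma commutant_set_mult:
  assumes "pauli_one \<in> A" "pauli_one \<in> B"
  shows "commutant I (set_mult A B) = commutant I A \<inter> commutant I B"
proof
  have "pauli_mult a pauli_one \<in> set_mult A B" if "a \<in> A" for a
    using that assms unfolding set_mult_def by blast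
  moreover have "pauli_mult pauli_one b \<in> set_mult A B" if "b \<in> B" for b
    using that assms unfolding set_mult_def by blast
  ultimately have "A \<subseteq> set_mult A B" "B \<subseteq> set_mult A B"
    by auto
  then show "commutant I (set_mult A B) \<subseteq> commutant I A \<inter> commutant I B"
    using commutant_antimono by blast
  show "commutant I A \<inter> commutant I B \<subseteq> commutant I (set_mult A B)"
    by (auto simp: commutant_def set_mult_def symp_mult_right)
qed

lemma commutant_Int:
  assumes "finite I" "pauli_subgroup I A" "pauli_subgroup I B"
  shows "commutant I (A \<inter> B) = set_mult (commutant I A) (commutant I B)"
proof -
  let ?P = "set_mult (commutant I A) (commutant I B)"
  have "commutant I ?P = commutant I (commutant I A) \<inter> commutant I (commutant I B)"
    by (rule commutant_set_mult) (use commutant_subgroup in \<open>auto simp: pauli_subgroup_def\<close>)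
  also have "\<dots> = A \<inter> B"
    using commutant_commutant[OF assms(1,2)] commutant_commutant[OF assms(1,3)] by simp
  finally have "commutant I ?P = A \<inter> B" .
  then have "commutant I (A \<inter> B) = commutant I (commutant I ?P)"
    by simp
  also have "\<dots> = ?P"
    using set_mult_subgroup[OF commutant_subgroup commutant_subgroup]
    by (rule commutant_commutant[OF assms(1)])
  finally show ?thesis .
qed

lemma lagrangian_if_card:
  assumes "finite I" "pauli_subgroup I S" "\<And>p q. p \<in> S \<Longrightarrow> q \<in> S \<Longrightarrow> symp I p q = 1"
    "card S * card S = card (paulis_on I)"
  shows "lagrangian I S"
proof -
  have sub: "S \<subseteq> commutant I S"
    using assms(2,3) by (auto simp: commutant_def pauli_subgroup_def)
  have "card S > 0"
    using assms(2) finite_pauli_subgroup[OF assms(1,2)]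
    by (auto simp: pauli_subgroup_def card_gt_0_iff)
  then have "card (commutant I S) = card S"
    using card_commutant[OF assms(1,2)] assms(4) by (metis mult_cancel1 not_gr0)
  then have "S = commutant I S"
    using sub finite_pauli_subgroup[OF assms(1) commutant_subgroup] by (metis card_subset_eq)
  then show ?thesis
    using assms(2) by (simp add: lagrangian_def)
qed

section \<open>Pauli action and stabilizer groups\<close>

type_synonym 'v qstate = "('v \<Rightarrow> bool) \<Rightarrow> complex"

definition pauli_flip :: "'v set \<Rightarrow> 'v pauli \<Rightarrow> ('v \<Rightarrow> bool) \<Rightarrow> 'v \<Rightarrow> bool" where
  "pauli_flip I p t = (\<lambda>i. if i \<in> I \<and> fst (p i) then \<not> t i else t i)"

definition pauli_act :: "'v set \<Rightarrow> 'v pauli \<Rightarrow> 'v qstate \<Rightarrow> 'v qstate" where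
  "pauli_act I p f t = sign I (\<lambda>i. snd (p i) \<and> (t i \<noteq> fst (p i))) * f (pauli_flip I p t)"

definition stabilizer :: "'v set \<Rightarrow> 'v qstate \<Rightarrow> 'v pauli set" where
  "stabilizer I f = {p \<in> paulis_on I. \<exists>c. \<forall>t. pauli_act I p f t = c * f t}"

definition depends_only_on :: "'v set \<Rightarrow> 'v qstate \<Rightarrow> bool" where
  "depends_only_on I f \<longleftrightarrow> (\<forall>t t'. (\<forall>i\<in>I. t i = t' i) \<longrightarrow> f t = f t')"

text \<open>Stabilizer states together with the zero vector; unlike the stabilizer states alone, this
  class is closed under contraction.\<close>
definition lagrangian_stabilized :: "'v set \<Rightarrow> 'v qstate \<Rightarrow> bool" where
  "lagrangian_stabilized I f \<longleftrightarrow> (\<exists>S. lagrangian I S \<and> S \<subseteq> stabilizer I f)"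

lemma paulis_eq_paulis_on: "paulis m = paulis_on {0..<m}"
  by (auto simp: paulis_def paulis_on_def)

lemma pauli_apply_eq_pauli_act: "pauli_apply m p f t = pauli_act {0..<m} p f t"
  by (simp add: pauli_apply_def pauli_act_def pauli_flip_def sign_eq_power_card)

lemma pauli_commute_iff_symp: "pauli_commute m p q \<longleftrightarrow> symp {0..<m} p q = 1"
proof -
  have "((-1::complex) ^ k = 1) = even k" for k
    by (cases "even k") auto
  then show ?thesis
    by (simp add: pauli_commute_def symp_def sign_eq_power_card anticommute_at_def)
qed

lemma pauli_flip_flip: "pauli_flip I q (pauli_flip I p t) = pauli_flip I (pauli_mult p q) t"
  unfolding pauli_flip_def pauli_mult_def fun_eq_iff by simp

lemma pauli_act_act:
  "pauli_act I p (pauli_act I q f) t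
    = sign I (\<lambda>i. snd (p i) \<and> fst (q i)) * pauli_act I (pauli_mult p q) f t"
proof -
  let ?t' = "pauli_flip I p t"
  have "sign I (\<lambda>i. snd (p i) \<and> (t i \<noteq> fst (p i))) * sign I (\<lambda>i. snd (q i) \<and> (?t' i \<noteq> fst (q i)))
      = sign I (\<lambda>i. (snd (p i) \<and> (t i \<noteq> fst (p i))) \<noteq> (snd (q i) \<and> (?t' i \<noteq> fst (q i))))"
    by (rule sign_xor[symmetric])
  also have "\<dots> = sign I (\<lambda>i. (snd (p i) \<and> fst (q i)) \<noteq>
      (snd (pauli_mult p q i) \<and> (t i \<noteq> fst (pauli_mult p q i))))"
    by (rule sign_cong) (auto simp: pauli_flip_def pauli_mult_def)
  finally show ?thesis
    unfolding pauli_act_def pauli_flip_flip sign_xor by (simp add: algebra_simps)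
qed

lemma pauli_act_one [simp]: "pauli_act I pauli_one f = f"
  by (auto simp: pauli_act_def fun_eq_iff pauli_one_def pauli_flip_def intro!: sign_eq_1)

lemma pauli_act_scale: "pauli_act I p (\<lambda>t. c * f t) t = c * pauli_act I p f t"
  by (simp add: pauli_act_def algebra_simps)

lemma stabilizerE:
  assumes "p \<in> stabilizer I f"
  obtains c where "pauli_act I p f = (\<lambda>t. c * f t)"
  using assms by (auto simp: stabilizer_def fun_eq_iff)

lemma stabilizer_subgroup: "pauli_subgroup I (stabilizer I f)"
  unfolding pauli_subgroup_def
proof (intro conjI ballI)
  show "stabilizer I f \<subseteq> paulis_on I"
    by (auto simp: stabilizer_def)
  show "pauli_one \<in> stabilizer I f"
    by (auto simp: stabilizer_def intro: exI[of _ 1])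
  fix p q
  assume p: "p \<in> stabilizer I f" and q: "q \<in> stabilizer I f"
  obtain cp where cp: "pauli_act I p f = (\<lambda>t. cp * f t)"
    using p by (rule stabilizerE)
  obtain cq where cq: "pauli_act I q f = (\<lambda>t. cq * f t)"
    using q by (rule stabilizerE)
  let ?k = "sign I (\<lambda>i. snd (p i) \<and> fst (q i))"
  have "pauli_act I (pauli_mult p q) f t = (?k * cq * cp) * f t" for t
  proof -
    have "?k * pauli_act I p (pauli_act I q f) t = (?k * ?k) * pauli_act I (pauli_mult p q) f t"
      by (simp add: pauli_act_act mult.assoc)
    then have "pauli_act I (pauli_mult p q) f t = ?k * pauli_act I p (pauli_act I q f) t"
      by (simp add: sign_square)
    then show ?thesis
      by (simp add: cp cq pauli_act_scale)
  qed
  moreover have "pauli_mult p q \<in> paulis_on I"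
    using p q by (auto simp: stabilizer_def pauli_mult_paulis_on)
  ultimately show "pauli_mult p q \<in> stabilizer I f"
    by (auto simp: stabilizer_def)
qed

lemma sign_commutator:
  "sign I (\<lambda>i. snd (p i) \<and> fst (q i)) * sign I (\<lambda>i. snd (q i) \<and> fst (p i)) = symp I p q"
  unfolding symp_def sign_xor[symmetric] by (rule sign_cong) (auto simp: anticommute_at_def)

text \<open>If \<open>p\<close> and \<open>q\<close> anticommute, \<open>pq\<close> and \<open>qp = -pq\<close> both map \<open>f\<close> to \<open>c\<^sub>p c\<^sub>q f\<close>; hence
  \<open>c\<^sub>p c\<^sub>q f = 0\<close>, which is impossible for \<open>f \<noteq> 0\<close> since Paulis are invertible.\<close>
lemma stabilizer_isotropic:
  assumes "f t0 \<noteq> 0" "p \<in> stabilizer I f" "q \<in> stabilizer I f"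
  shows "symp I p q = 1"
proof (rule ccontr)
  assume ne: "symp I p q \<noteq> 1"
  let ?k1 = "sign I (\<lambda>i. snd (p i) \<and> fst (q i))" and ?k2 = "sign I (\<lambda>i. snd (q i) \<and> fst (p i))"
  have "?k1 \<noteq> ?k2"
    using ne sign_commutator[of I p q] sign_square[of I "\<lambda>i. snd (q i) \<and> fst (p i)"] by auto
  obtain cp where cp: "pauli_act I p f = (\<lambda>t. cp * f t)"
    using assms(2) by (rule stabilizerE)
  obtain cq where cq: "pauli_act I q f = (\<lambda>t. cq * f t)"
    using assms(3) by (rule stabilizerE)
  have e1: "cp * cq * f t = ?k1 * pauli_act I (pauli_mult p q) f t" for t
    using pauli_act_act[of I p q f t] by (simp add: cp cq pauli_act_scale algebra_simps)
  have e2: "cp * cq * f t = ?k2 * pauli_act I (pauli_mult p q) f t" for t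
    using pauli_act_act[of I q p f t]
    by (simp add: cp cq pauli_act_scale pauli_mult_commute[of q p] algebra_simps)
  have "pauli_act I (pauli_mult p q) f t = 0" for t
    using e1[of t] e2[of t] \<open>?k1 \<noteq> ?k2\<close> by auto
  then have "cp * cq = 0"
    using e1[of t0] assms(1) by simp
  moreover have "c \<noteq> 0" if "pauli_act I r f = (\<lambda>t. c * f t)" for r c
  proof
    assume "c = 0"
    then have "pauli_act I r (pauli_act I r f) t0 = 0"
      using that by (simp add: pauli_act_def)
    moreover have "pauli_act I r (pauli_act I r f) t0 = sign I (\<lambda>i. snd (r i) \<and> fst (r i)) * f t0"
      using pauli_act_act[of I r r f t0] by simp
    ultimately show False
      using assms(1) sign_nonzero by auto
  qed
  ultimately show False
    using cp cq by auto
qed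

lemma lagrangian_symp: "lagrangian I S \<Longrightarrow> p \<in> S \<Longrightarrow> q \<in> S \<Longrightarrow> symp I p q = 1"
  unfolding lagrangian_def commutant_def by blast

lemma card_lagrangian: "finite I \<Longrightarrow> lagrangian I S \<Longrightarrow> card S * card S = card (paulis_on I)"
  using card_commutant by (fastforce simp: lagrangian_def)

lemma stabilizer_lagrangian:
  assumes "finite I" "lagrangian_stabilized I f" "f t0 \<noteq> 0"
  shows "lagrangian I (stabilizer I f)"
proof -
  obtain S where S: "lagrangian I S" "S \<subseteq> stabilizer I f"
    using assms(2) by (auto simp: lagrangian_stabilized_def)
  have "stabilizer I f \<subseteq> commutant I (stabilizer I f)"
    using stabilizer_isotropic[where f=f, OF assms(3)] by (auto simp: commutant_def stabilizer_def)
  also have "\<dots> \<subseteq> commutant I S"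
    by (rule commutant_antimono[OF S(2)])
  also have "\<dots> = S"
    using S(1) by (simp add: lagrangian_def)
  finally have "stabilizer I f = S"
    using S(2) by blast
  then show ?thesis
    using S(1) by simp
qed

lemma lagrangian_stabilized_scale:
  "lagrangian_stabilized I f \<Longrightarrow> lagrangian_stabilized I (\<lambda>t. c * f t)"
  unfolding lagrangian_stabilized_def stabilizer_def by (force simp: pauli_act_scale)

lemma depends_only_onD: "depends_only_on I f \<Longrightarrow> (\<And>i. i \<in> I \<Longrightarrow> t i = t' i) \<Longrightarrow> f t = f t'"
  unfolding depends_only_on_def by blast

section \<open>Tensor products and relabelling\<close>

lemma pauli_mult_disjoint_at:
  assumes "a \<in> paulis_on I" "b \<in> paulis_on J" "I \<inter> J = {}"
  shows "i \<in> I \<Longrightarrow> pauli_mult a b i = a i" "i \<in> J \<Longrightarrow> pauli_mult a b i = b i"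
  using assms by (auto simp: pauli_mult_def paulis_on_def)

lemma card_set_mult_disjoint:
  assumes "S \<subseteq> paulis_on I" "T \<subseteq> paulis_on J" "I \<inter> J = {}"
  shows "card (set_mult S T) = card S * card T"
proof -
  have "inj_on (\<lambda>(a, b). pauli_mult a b) (S \<times> T)"
  proof (rule inj_onI, clarify)
    fix a b a' b'
    assume "a \<in> S" "b \<in> T" "a' \<in> S" "b' \<in> T" and eq: "pauli_mult a b = pauli_mult a' b'"
    then have V: "a \<in> paulis_on I" "b \<in> paulis_on J" "a' \<in> paulis_on I" "b' \<in> paulis_on J"
      using assms(1,2) by auto
    note at = pauli_mult_disjoint_at[OF V(1,2) assms(3)] pauli_mult_disjoint_at[OF V(3,4) assms(3)]
    show "a = a' \<and> b = b'"
    proof (intro conjI ext)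
      fix i
      show "a i = a' i"
        using at(1,3)[of i] eq V by (cases "i \<in> I") (auto simp: paulis_on_def)
      show "b i = b' i"
        using at(2,4)[of i] eq V by (cases "i \<in> J") (auto simp: paulis_on_def)
    qed
  qed
  moreover have "set_mult S T = (\<lambda>(a, b). pauli_mult a b) ` (S \<times> T)"
    by (auto simp: set_mult_def)
  ultimately show ?thesis
    by (simp add: card_image card_cartesian_product)
qed

lemma lagrangian_set_mult:
  assumes fin: "finite I" "finite J" and disj: "I \<inter> J = {}"
    and S: "lagrangian I S" and T: "lagrangian J T"
  shows "lagrangian (I \<union> J) (set_mult S T)"
proof (rule lagrangian_if_card)
  have SV: "S \<subseteq> paulis_on I" and TV: "T \<subseteq> paulis_on J"
    using S T by (auto simp: lagrangian_def pauli_subgroup_def)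
  show "finite (I \<union> J)"
    using fin by simp
  show "pauli_subgroup (I \<union> J) (set_mult S T)"
    using S T paulis_on_mono[of I "I \<union> J"] paulis_on_mono[of J "I \<union> J"]
    by (intro set_mult_subgroup) (auto simp: lagrangian_def pauli_subgroup_def)
  show "symp (I \<union> J) p q = 1" if pq: "p \<in> set_mult S T" "q \<in> set_mult S T" for p q
  proof -
    obtain a b a' b' where ab: "p = pauli_mult a b" "q = pauli_mult a' b'"
      "a \<in> S" "b \<in> T" "a' \<in> S" "b' \<in> T"
      using pq unfolding set_mult_def by blast
    have "symp (I \<union> J) a a' = symp I a a'" "symp (I \<union> J) b b' = symp J b b'"
      using ab SV TV fin by (auto intro!: symp_superset)
    then have "symp (I \<union> J) a a' = 1" "symp (I \<union> J) b b' = 1"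
      using ab lagrangian_symp[OF S] lagrangian_symp[OF T] by simp_all
    moreover have "symp (I \<union> J) a b' = 1" "symp (I \<union> J) b a' = 1"
      using ab SV TV disj by (auto intro: symp_disjoint)
    ultimately show ?thesis
      unfolding ab symp_mult_left symp_mult_right by simp
  qed
  have "card (set_mult S T) = card S * card T"
    using SV TV disj by (rule card_set_mult_disjoint)
  then show "card (set_mult S T) * card (set_mult S T) = card (paulis_on (I \<union> J))"
    using card_lagrangian[OF fin(1) S] card_lagrangian[OF fin(2) T] fin disj
    by (simp add: card_paulis_on card_Un_disjoint power_add algebra_simps)
qed

lemma pauli_act_tensor:
  assumes fin: "finite I" "finite J" and disj: "I \<inter> J = {}"
    and a: "a \<in> paulis_on I" and b: "b \<in> paulis_on J"
    and f: "depends_only_on I f" and g: "depends_only_on J g"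
  shows "pauli_act (I \<union> J) (pauli_mult a b) (\<lambda>t. f t * g t) t
    = pauli_act I a f t * pauli_act J b g t"
proof -
  note at = pauli_mult_disjoint_at[OF a b disj]
  let ?P = "\<lambda>i. snd (pauli_mult a b i) \<and> (t i \<noteq> fst (pauli_mult a b i))"
  have "sign (I \<union> J) ?P = sign I ?P * sign J ?P"
    by (rule sign_union[OF fin disj])
  also have "sign I ?P = sign I (\<lambda>i. snd (a i) \<and> (t i \<noteq> fst (a i)))"
    by (rule sign_cong) (simp add: at)
  also have "sign J ?P = sign J (\<lambda>i. snd (b i) \<and> (t i \<noteq> fst (b i)))"
    by (rule sign_cong) (simp add: at)
  finally have s: "sign (I \<union> J) ?P
      = sign I (\<lambda>i. snd (a i) \<and> (t i \<noteq> fst (a i))) * sign J (\<lambda>i. snd (b i) \<and> (t i \<noteq> fst (b i)))" .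
  have "f (pauli_flip (I \<union> J) (pauli_mult a b) t) = f (pauli_flip I a t)"
    by (rule depends_only_onD[OF f]) (auto simp: pauli_flip_def at)
  moreover have "g (pauli_flip (I \<union> J) (pauli_mult a b) t) = g (pauli_flip J b t)"
    by (rule depends_only_onD[OF g]) (auto simp: pauli_flip_def at)
  ultimately show ?thesis
    unfolding pauli_act_def s by (simp add: algebra_simps)
qed

lemma lagrangian_stabilized_mult:
  assumes fin: "finite I" "finite J" and disj: "I \<inter> J = {}"
    and f: "lagrangian_stabilized I f" "depends_only_on I f"
    and g: "lagrangian_stabilized J g" "depends_only_on J g"
  shows "lagrangian_stabilized (I \<union> J) (\<lambda>t. f t * g t)"
proof -
  obtain S where S: "lagrangian I S" "S \<subseteq> stabilizer I f"
    using f(1) by (auto simp: lagrangian_stabilized_def)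
  obtain T where T: "lagrangian J T" "T \<subseteq> stabilizer J g"
    using g(1) by (auto simp: lagrangian_stabilized_def)
  have "set_mult S T \<subseteq> stabilizer (I \<union> J) (\<lambda>t. f t * g t)"
  proof
    fix s
    assume "s \<in> set_mult S T"
    then obtain a b where ab: "s = pauli_mult a b" "a \<in> stabilizer I f" "b \<in> stabilizer J g"
      using S T by (auto simp: set_mult_def)
    obtain ca where ca: "pauli_act I a f = (\<lambda>t. ca * f t)"
      using ab(2) by (rule stabilizerE)
    obtain cb where cb: "pauli_act J b g = (\<lambda>t. cb * g t)"
      using ab(3) by (rule stabilizerE)
    have ab': "a \<in> paulis_on I" "b \<in> paulis_on J"
      using ab by (auto simp: stabilizer_def)
    have "pauli_act (I \<union> J) s (\<lambda>t. f t * g t) t = (ca * cb) * (f t * g t)" for t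
      unfolding ab(1) pauli_act_tensor[OF fin disj ab' f(2) g(2)] ca cb by simp
    moreover have "s \<in> paulis_on (I \<union> J)"
      using ab' paulis_on_mono[of I "I \<union> J"] paulis_on_mono[of J "I \<union> J"]
      by (auto simp: ab(1) intro: pauli_mult_paulis_on)
    ultimately show "s \<in> stabilizer (I \<union> J) (\<lambda>t. f t * g t)"
      by (auto simp: stabilizer_def)
  qed
  then show ?thesis
    using lagrangian_set_mult[OF fin disj S(1) T(1)] by (auto simp: lagrangian_stabilized_def)
qed

definition pauli_lift :: "('a \<Rightarrow> 'b) \<Rightarrow> 'a set \<Rightarrow> 'a pauli \<Rightarrow> 'b pauli" where
  "pauli_lift \<mu> I p = (\<lambda>j. if j \<in> \<mu> ` I then p (inv_into I \<mu> j) else (False, False))"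

lemma pauli_lift_at: "inj_on \<mu> I \<Longrightarrow> i \<in> I \<Longrightarrow> pauli_lift \<mu> I p (\<mu> i) = p i"
  by (simp add: pauli_lift_def)

lemma pauli_lift_paulis_on: "pauli_lift \<mu> I p \<in> paulis_on (\<mu> ` I)"
  by (auto simp: pauli_lift_def paulis_on_def)

lemma pauli_lift_one: "pauli_lift \<mu> I pauli_one = pauli_one"
  by (auto simp: pauli_lift_def pauli_one_def)

lemma pauli_lift_mult:
  "pauli_lift \<mu> I (pauli_mult p q) = pauli_mult (pauli_lift \<mu> I p) (pauli_lift \<mu> I q)"
  by (auto simp: pauli_lift_def pauli_mult_def)

lemma inj_on_pauli_lift:
  assumes inj: "inj_on \<mu> I"
  shows "inj_on (pauli_lift \<mu> I) (paulis_on I)"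
proof (rule inj_onI, rule ext)
  fix p q i
  assume pq: "p \<in> paulis_on I" "q \<in> paulis_on I" and eq: "pauli_lift \<mu> I p = pauli_lift \<mu> I q"
  show "p i = q i"
  proof (cases "i \<in> I")
    case True
    then show ?thesis
      using eq pauli_lift_at[OF inj True, of p] pauli_lift_at[OF inj True, of q] by simp
  next
    case False
    then show ?thesis
      using pq by (simp add: paulis_on_def)
  qed
qed

lemma symp_lift: "inj_on \<mu> I \<Longrightarrow> symp (\<mu> ` I) (pauli_lift \<mu> I p) (pauli_lift \<mu> I q) = symp I p q"
  unfolding symp_def by (simp add: sign_reindex pauli_lift_at cong: sign_cong)

lemma pauli_act_lift:
  assumes inj: "inj_on \<mu> I" and f: "depends_only_on I f"
  shows "pauli_act (\<mu> ` I) (pauli_lift \<mu> I a) (\<lambda>t. f (t \<circ> \<mu>)) t = pauli_act I a f (t \<circ> \<mu>)"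
proof -
  have "f (pauli_flip (\<mu> ` I) (pauli_lift \<mu> I a) t \<circ> \<mu>) = f (pauli_flip I a (t \<circ> \<mu>))"
    by (rule depends_only_onD[OF f]) (auto simp: pauli_flip_def pauli_lift_at[OF inj])
  then show ?thesis
    unfolding pauli_act_def
    by (simp add: sign_reindex[OF inj] pauli_lift_at[OF inj] cong: sign_cong)
qed

lemma lagrangian_lift:
  assumes fin: "finite I" and inj: "inj_on \<mu> I" and S: "lagrangian I S"
  shows "lagrangian (\<mu> ` I) (pauli_lift \<mu> I ` S)"
proof (rule lagrangian_if_card)
  have SV: "S \<subseteq> paulis_on I" and sub: "pauli_subgroup I S"
    using S by (auto simp: lagrangian_def pauli_subgroup_def)
  show "finite (\<mu> ` I)"
    using fin by simp
  show "pauli_subgroup (\<mu> ` I) (pauli_lift \<mu> I ` S)"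
    using sub pauli_lift_one pauli_lift_mult pauli_lift_paulis_on by (rule pauli_subgroup_image)
  show "symp (\<mu> ` I) p q = 1" if "p \<in> pauli_lift \<mu> I ` S" "q \<in> pauli_lift \<mu> I ` S" for p q
    using that symp_lift[OF inj] lagrangian_symp[OF S] by auto
  have "card (pauli_lift \<mu> I ` S) = card S"
    using inj_on_subset[OF inj_on_pauli_lift[OF inj] SV] by (rule card_image)
  then show "card (pauli_lift \<mu> I ` S) * card (pauli_lift \<mu> I ` S) = card (paulis_on (\<mu> ` I))"
    using card_lagrangian[OF fin S] fin inj by (simp add: card_paulis_on card_image)
qed

lemma lagrangian_stabilized_relabel:
  assumes fin: "finite I" and inj: "inj_on \<mu> I"
    and f: "lagrangian_stabilized I f" "depends_only_on I f"
  shows "lagrangian_stabilized (\<mu> ` I) (\<lambda>t. f (t \<circ> \<mu>))"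
proof -
  obtain S where S: "lagrangian I S" "S \<subseteq> stabilizer I f"
    using f(1) by (auto simp: lagrangian_stabilized_def)
  have "pauli_lift \<mu> I ` S \<subseteq> stabilizer (\<mu> ` I) (\<lambda>t. f (t \<circ> \<mu>))"
  proof
    fix s
    assume "s \<in> pauli_lift \<mu> I ` S"
    then obtain a where a: "s = pauli_lift \<mu> I a" "a \<in> stabilizer I f"
      using S(2) by blast
    obtain c where "pauli_act I a f = (\<lambda>t. c * f t)"
      using a(2) by (rule stabilizerE)
    then have "pauli_act (\<mu> ` I) s (\<lambda>t. f (t \<circ> \<mu>)) t = c * f (t \<circ> \<mu>)" for t
      unfolding a(1) pauli_act_lift[OF inj f(2)] by simp
    then show "s \<in> stabilizer (\<mu> ` I) (\<lambda>t. f (t \<circ> \<mu>))"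
      using pauli_lift_paulis_on a(1) by (auto simp: stabilizer_def)
  qed
  then show ?thesis
    using lagrangian_lift[OF fin inj S(1)] by (auto simp: lagrangian_stabilized_def)
qed

section \<open>Symplectic reduction and contraction\<close>

text \<open>The set on the left contains every single-qubit \<open>X\<close> and \<open>Z\<close> outside \<open>C\<close>, so its
  commutant lives on \<open>C\<close>.\<close>
lemma commutant_preimage_restrict:
  assumes fin: "finite I" and CI: "C \<subseteq> I" and V: "lagrangian C V"
  shows "commutant I {p \<in> paulis_on I. pauli_restrict C p \<in> V} = V"
    (is "commutant I ?W = V")
proof
  have VV: "V \<subseteq> paulis_on C"
    using V by (auto simp: lagrangian_def pauli_subgroup_def)
  have finC: "finite C"
    using fin CI finite_subset by blast
  show "V \<subseteq> commutant I ?W"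
  proof
    fix v
    assume v: "v \<in> V"
    have "symp I v w = 1" if "w \<in> ?W" for w
    proof -
      have "symp I v w = symp C v (pauli_restrict C w)"
        using v VV by (simp add: symp_superset[OF fin CI] subset_iff symp_restrict_right)
      then show ?thesis
        using that v lagrangian_symp[OF V] by auto
    qed
    then show "v \<in> commutant I ?W"
      using v VV paulis_on_mono[OF CI] by (auto simp: commutant_def)
  qed
  show "commutant I ?W \<subseteq> V"
  proof
    fix u
    assume u: "u \<in> commutant I ?W"
    have uW: "symp I u w = 1" if "w \<in> ?W" for w
      using u that by (auto simp: commutant_def)
    have "u i = (False, False)" if i: "i \<in> I - C" for i
    proof -
      have "pauli_restrict C (pauli_one(i := x)) = pauli_one" "pauli_one(i := x) \<in> paulis_on I"
        for x
        using i by (auto simp: pauli_restrict_def pauli_one_def paulis_on_def)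
      then have "pauli_one(i := x) \<in> ?W" for x
        using V by (simp add: lagrangian_def pauli_subgroup_def)
      then have "\<not> anticommute_at (u i) x" for x
        using uW symp_single[OF fin, of i u x] i by (auto split: if_splits)
      from this[of "(True, False)"] this[of "(False, True)"] show ?thesis
        by (simp add: anticommute_at_X anticommute_at_Z prod_eq_iff)
    qed
    then have uC: "u \<in> paulis_on C"
      using u by (auto simp: commutant_def paulis_on_def)
    have "symp C u v = 1" if "v \<in> V" for v
    proof -
      have "v \<in> ?W"
        using that VV paulis_on_mono[OF CI] by (auto simp: pauli_restrict_id)
      then show ?thesis
        using uW symp_superset[OF fin CI uC] by simp
    qed
    then have "u \<in> commutant C V"
      using uC by (auto simp: commutant_def)
    then show "u \<in> V"
      using V by (simp add: lagrangian_def)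
  qed
qed

lemma pauli_subgroup_preimage_restrict:
  "pauli_subgroup C V \<Longrightarrow> pauli_subgroup I {p \<in> paulis_on I. pauli_restrict C p \<in> V}"
  by (auto simp: pauli_subgroup_def pauli_restrict_mult pauli_mult_paulis_on)

lemma symp_restrict_Diff:
  assumes fin: "finite I" and CI: "C \<subseteq> I" and V: "lagrangian C V"
    and ab: "pauli_restrict C a \<in> V" "pauli_restrict C b \<in> V"
  shows "symp (I - C) (pauli_restrict (I - C) a) (pauli_restrict (I - C) b) = symp I a b"
proof -
  have "symp C a b = symp C (pauli_restrict C a) (pauli_restrict C b)"
    by (simp add: symp_restrict_left symp_restrict_right)
  also have "\<dots> = 1"
    using ab by (rule lagrangian_symp[OF V])
  finally have "symp C a b = 1" .
  moreover have "symp I a b = symp (I - C) a b * symp C a b"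
    unfolding symp_def by (rule sign_split[OF fin CI])
  ultimately show ?thesis
    by (simp add: symp_restrict_left symp_restrict_right)
qed

text \<open>By the previous lemma the commutant of \<open>S \<inter> W\<close> is \<open>S V\<close>, and an element \<open>s v\<close> of it that
  vanishes on \<open>C\<close> has \<open>s \<in> W\<close>.\<close>
lemma commutant_reduction:
  assumes fin: "finite I" and CI: "C \<subseteq> I" and V: "lagrangian C V" and S: "lagrangian I S"
  defines "W \<equiv> {p \<in> paulis_on I. pauli_restrict C p \<in> V}"
  shows "commutant (I - C) (pauli_restrict (I - C) ` (S \<inter> W)) \<subseteq> pauli_restrict (I - C) ` (S \<inter> W)"
proof
  let ?R = "pauli_restrict (I - C)"
  have subV: "pauli_subgroup C V" and subS: "pauli_subgroup I S"
    using V S by (auto simp: lagrangian_def)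
  fix y
  assume y: "y \<in> commutant (I - C) (?R ` (S \<inter> W))"
  then have yV: "y \<in> paulis_on (I - C)"
    by (simp add: commutant_def)
  have "symp I y s = 1" if "s \<in> S \<inter> W" for s
  proof -
    have "symp I y s = symp (I - C) y (?R s)"
      using yV fin by (simp add: symp_superset symp_restrict_right)
    then show ?thesis
      using y that by (auto simp: commutant_def)
  qed
  then have "y \<in> commutant I (S \<inter> W)"
    using yV paulis_on_mono[of "I - C" I] by (auto simp: commutant_def)
  also have "\<dots> = set_mult S V"
    using commutant_Int[OF fin subS pauli_subgroup_preimage_restrict[OF subV]]
      commutant_preimage_restrict[OF fin CI V] S
    by (simp add: W_def lagrangian_def)
  finally obtain s v where sv: "y = pauli_mult s v" "s \<in> S" "v \<in> V"
    by (auto simp: set_mult_def)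
  have vC: "v \<in> paulis_on C" and yC: "pauli_restrict C y = pauli_one"
    using sv(3) subV yV
    by (auto simp: pauli_subgroup_def pauli_restrict_def pauli_one_def paulis_on_def)
  have s: "s = pauli_mult y v"
    using sv(1) by simp
  have "pauli_restrict C s = v"
    unfolding s pauli_restrict_mult yC using vC by (simp add: pauli_restrict_id)
  moreover have "?R v = pauli_one"
    using vC by (auto simp: pauli_restrict_def paulis_on_def pauli_one_def)
  then have "?R s = y"
    unfolding s pauli_restrict_mult pauli_restrict_id[OF yV] by simp
  moreover have "s \<in> S \<inter> W"
    using sv subS calculation by (auto simp: W_def pauli_subgroup_def)
  ultimately show "y \<in> ?R ` (S \<inter> W)"
    by (metis image_eqI)
qed

lemma lagrangian_reduction:
  assumes fin: "finite I" and CI: "C \<subseteq> I" and V: "lagrangian C V" and S: "lagrangian I S"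
  defines "W \<equiv> {p \<in> paulis_on I. pauli_restrict C p \<in> V}"
  shows "lagrangian (I - C) (pauli_restrict (I - C) ` (S \<inter> W))"
proof -
  let ?R = "pauli_restrict (I - C)"
  have "pauli_subgroup I (S \<inter> W)"
    using S pauli_subgroup_preimage_restrict[of C V I] V
    by (auto simp: W_def lagrangian_def pauli_subgroup_def)
  then have sub: "pauli_subgroup (I - C) (?R ` (S \<inter> W))"
    using pauli_restrict_one pauli_restrict_mult pauli_restrict_paulis_on
    by (rule pauli_subgroup_image)
  have "?R ` (S \<inter> W) \<subseteq> commutant (I - C) (?R ` (S \<inter> W))"
    using symp_restrict_Diff[OF fin CI V] lagrangian_symp[OF S] pauli_restrict_paulis_on
    by (auto simp: commutant_def W_def)
  then show ?thesis
    using sub commutant_reduction[OF fin CI V S] by (auto simp: lagrangian_def W_def)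
qed

lemma prod_fixpoint_free_involution:
  fixes h :: "'v \<Rightarrow> 'a::comm_monoid_mult"
  assumes "finite K" "\<And>i. i \<in> K \<Longrightarrow> \<sigma> i \<in> K \<and> \<sigma> i \<noteq> i \<and> \<sigma> (\<sigma> i) = i"
    "\<And>i. i \<in> K \<Longrightarrow> h (\<sigma> i) = h i" "\<And>i. i \<in> K \<Longrightarrow> h i * h i = 1"
  shows "prod h K = 1"
  using assms
proof (induction "card K" arbitrary: K rule: less_induct)
  case less
  show ?case
  proof (cases "K = {}")
    case False
    then obtain i where i: "i \<in> K"
      by blast
    let ?K' = "K - {i} - {\<sigma> i}"
    have si: "\<sigma> i \<in> K - {i}"
      using less.prems(2)[OF i] i by auto
    have "prod h K = h i * (h (\<sigma> i) * prod h ?K')"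
      using less.prems(1) i si by (simp add: prod.remove)
    also have "prod h ?K' = 1"
    proof (rule less.hyps)
      show "card ?K' < card K"
        using i less.prems(1) by (intro psubset_card_mono) auto
      fix j
      assume j: "j \<in> ?K'"
      then have "\<sigma> j \<noteq> i" "\<sigma> j \<noteq> \<sigma> i"
        using less.prems(2) i by (metis DiffD1 DiffD2 singletonI)+
      then show "\<sigma> j \<in> ?K' \<and> \<sigma> j \<noteq> j \<and> \<sigma> (\<sigma> j) = j"
        using j less.prems(2) by auto
    qed (use less.prems in auto)
    finally show ?thesis
      using less.prems(3,4)[OF i] by (simp add: mult.assoc[symmetric])
  qed simp
qed

lemma symp_pair:
  assumes "finite I" "i \<in> I" "k \<in> I" "i \<noteq> k"
  shows "symp I u (pauli_one(i := x, k := x))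
    = (if anticommute_at (u i) x then -1 else 1) * (if anticommute_at (u k) x then -1 else 1)"
proof -
  let ?P = "\<lambda>j. anticommute_at (u j) ((pauli_one(i := x, k := x)) j)"
  have "symp I u (pauli_one(i := x, k := x)) = (if ?P i then -1 else 1) * sign (I - {i}) ?P"
    unfolding symp_def sign_def by (rule prod.remove[OF assms(1,2)])
  also have "sign (I - {i}) ?P = (if ?P k then -1 else 1)"
    using assms by (intro sign_single) (auto simp: pauli_one_def anticommute_at_def)
  moreover have "?P i = anticommute_at (u i) x" "?P k = anticommute_at (u k) x"
    using assms(4) by simp_all
  ultimately show ?thesis
    by simp
qed

lemma pauli_flip_override:
  "C \<subseteq> I \<Longrightarrow>
    pauli_flip I s (override_on t a C) = override_on (pauli_flip (I - C) s t) (pauli_flip C s a) C"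
  by (auto simp: pauli_flip_def override_on_def)

lemma pauli_act_restrict: "pauli_act I (pauli_restrict I s) f = pauli_act I s f"
proof -
  have flip: "pauli_flip I (pauli_restrict I s) = pauli_flip I s"
    by (auto simp: pauli_flip_def pauli_restrict_def fun_eq_iff)
  have sign: "sign I (\<lambda>i. snd (pauli_restrict I s i) \<and> (t i \<noteq> fst (pauli_restrict I s i)))
      = sign I (\<lambda>i. snd (s i) \<and> (t i \<noteq> fst (s i)))" for t
    by (rule sign_cong) (simp add: pauli_restrict_def)
  show ?thesis
    unfolding pauli_act_def flip sign ..
qed

text \<open>The legs in \<open>C\<close> are contracted: those in \<open>P\<close> with \<open>|+\<rangle>\<close>, the others pairwise with their
  partner, i.e.\ projected onto the Bell pair \<open>|00\<rangle> + |11\<rangle>\<close>.\<close>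
locale leg_pairing =
  fixes C P :: "'v set" and partner :: "'v \<Rightarrow> 'v"
  assumes finite_C: "finite C" and P_subset: "P \<subseteq> C"
    and partner: "\<And>i. i \<in> C - P \<Longrightarrow> partner i \<in> C - P \<and> partner i \<noteq> i \<and> partner (partner i) = i"
begin

definition pairing_stabilizer :: "'v pauli set" where
  "pairing_stabilizer = {p \<in> paulis_on C. (\<forall>i\<in>P. \<not> snd (p i)) \<and> (\<forall>i\<in>C - P. p (partner i) = p i)}"

definition paired_assignments :: "('v \<Rightarrow> bool) set" where
  "paired_assignments = {a. (\<forall>i. i \<notin> C \<longrightarrow> \<not> a i) \<and> (\<forall>i\<in>C - P. a (partner i) = a i)}"

definition contract :: "'v qstate \<Rightarrow> 'v qstate" where
  "contract f t = (\<Sum>a\<in>paired_assignments. f (override_on t a C))"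

lemma sign_paired:
  assumes "\<And>i. i \<in> P \<Longrightarrow> \<not> Q i" "\<And>i. i \<in> C - P \<Longrightarrow> Q (partner i) = Q i"
  shows "sign C Q = 1"
proof -
  have "sign C Q = sign (C - P) Q * sign P Q"
    by (rule sign_split[OF finite_C P_subset])
  also have "sign P Q = 1"
    by (rule sign_eq_1) (use assms in auto)
  also have "sign (C - P) Q = 1"
    unfolding sign_def using finite_C partner assms(2)
    by (intro prod_fixpoint_free_involution[where \<sigma>=partner]) auto
  finally show ?thesis
    by simp
qed

lemma pairing_stabilizerD:
  assumes "p \<in> pairing_stabilizer"
  shows "i \<in> P \<Longrightarrow> \<not> snd (p i)" "i \<in> C - P \<Longrightarrow> p (partner i) = p i"
  using assms by (auto simp: pairing_stabilizer_def)

lemma pairing_stabilizer_isotropic: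
  "a \<in> pairing_stabilizer \<Longrightarrow> b \<in> pairing_stabilizer \<Longrightarrow> symp C a b = 1"
  unfolding symp_def by (intro sign_paired) (auto simp: pairing_stabilizer_def anticommute_at_def)

text \<open>Test against \<open>X\<^sub>i\<close> for \<open>i \<in> P\<close> and against \<open>X\<^sub>iX\<^sub>j\<close>, \<open>Z\<^sub>iZ\<^sub>j\<close> for partners \<open>i, j\<close>.\<close>
lemma commutant_pairing_stabilizer: "commutant C pairing_stabilizer \<subseteq> pairing_stabilizer"
proof
  fix u
  assume u: "u \<in> commutant C pairing_stabilizer"
  then have uS: "symp C u w = 1" if "w \<in> pairing_stabilizer" for w
    using that by (auto simp: commutant_def)
  have "\<not> snd (u i)" if i: "i \<in> P" for i
  proof -
    have "pauli_one(i := (True, False)) \<in> pairing_stabilizer"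
      using i P_subset partner by (auto simp: pairing_stabilizer_def pauli_one_def paulis_on_def)
    then show ?thesis
      using uS symp_single[OF finite_C, of i u] i P_subset by (force simp: anticommute_at_X)
  qed
  moreover have "u (partner i) = u i" if i: "i \<in> C - P" for i
  proof -
    have pi: "partner i \<in> C - P" "partner i \<noteq> i" "partner (partner i) = i"
      using partner[OF i] by auto
    have "pauli_one(i := x, partner i := x) \<in> pairing_stabilizer" for x
    proof -
      have "(pauli_one(i := x, partner i := x)) (partner j) = (pauli_one(i := x, partner i := x)) j"
        if "j \<in> C - P" for j
        using partner[OF that] pi
        by (cases "j = i"; cases "j = partner i") (auto simp: pauli_one_def)
      then show ?thesis
        using i pi by (auto simp: pairing_stabilizer_def pauli_one_def paulis_on_def)
    qed
    then have "symp C u (pauli_one(i := (True, False), partner i := (True, False))) = 1"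
      "symp C u (pauli_one(i := (False, True), partner i := (False, True))) = 1"
      using uS by simp_all
    then have "snd (u i) = snd (u (partner i))" "fst (u i) = fst (u (partner i))"
      using symp_pair[OF finite_C, of i "partner i" u] i pi
      by (auto simp: anticommute_at_X anticommute_at_Z split: if_splits)
    then show ?thesis
      by (simp add: prod_eq_iff)
  qed
  ultimately show "u \<in> pairing_stabilizer"
    using u by (auto simp: pairing_stabilizer_def commutant_def)
qed

lemma lagrangian_pairing_stabilizer: "lagrangian C pairing_stabilizer"
proof -
  have "pauli_subgroup C pairing_stabilizer"
    by (auto simp: pauli_subgroup_def pairing_stabilizer_def pauli_mult_paulis_on)
      (auto simp: pauli_one_def pauli_mult_def)
  moreover have "pairing_stabilizer \<subseteq> commutant C pairing_stabilizer"
    using pairing_stabilizer_isotropic by (auto simp: commutant_def pairing_stabilizer_def)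
  ultimately show ?thesis
    using commutant_pairing_stabilizer by (auto simp: lagrangian_def)
qed

lemma depends_only_on_contract: "depends_only_on I f \<Longrightarrow> depends_only_on (I - C) (contract f)"
  unfolding depends_only_on_def contract_def by (auto intro!: sum.cong simp: override_on_def)

lemma bij_betw_pauli_flip_paired:
  assumes "pauli_restrict C s \<in> pairing_stabilizer"
  shows "bij_betw (pauli_flip C s) paired_assignments paired_assignments"
proof -
  have "s (partner i) = s i" if "i \<in> C - P" for i
    using pairing_stabilizerD(2)[OF assms that] partner[OF that] that
    by (simp add: pauli_restrict_def)
  then have "pauli_flip C s ` paired_assignments \<subseteq> paired_assignments"
    using partner by (auto simp: paired_assignments_def pauli_flip_def)
  moreover have "pauli_flip C s (pauli_flip C s a) = a" for a
    by (auto simp: pauli_flip_def fun_eq_iff)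
  ultimately show ?thesis
    by (intro bij_betw_byWitness[where f'="pauli_flip C s"]) auto
qed

text \<open>On a paired assignment of the legs in \<open>C\<close>, the part of \<open>s\<close> on \<open>C\<close> acts without sign, by
  flipping the assignment.\<close>
lemma pauli_act_override_paired:
  assumes fin: "finite I" and CI: "C \<subseteq> I" and s: "pauli_restrict C s \<in> pairing_stabilizer"
    and a: "a \<in> paired_assignments"
  shows "pauli_act I s f (override_on t a C)
    = pauli_act (I - C) s (\<lambda>t'. f (override_on t' (pauli_flip C s a) C)) t"
proof -
  let ?Q = "\<lambda>i. snd (s i) \<and> (override_on t a C i \<noteq> fst (s i))"
  have "sign C ?Q = 1"
  proof (rule sign_paired)
    show "\<not> ?Q i" if "i \<in> P" for i
      using pairing_stabilizerD(1)[OF s that] that P_subset by (auto simp: pauli_restrict_def)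
    fix i
    assume i: "i \<in> C - P"
    then have "partner i \<in> C" "i \<in> C"
      using partner by auto
    then show "?Q (partner i) = ?Q i"
      using a i pairing_stabilizerD(2)[OF s i]
      by (simp add: paired_assignments_def pauli_restrict_def)
  qed
  moreover have "sign I ?Q = sign (I - C) (\<lambda>i. snd (s i) \<and> (t i \<noteq> fst (s i))) * sign C ?Q"
    unfolding sign_split[OF fin CI] by (auto intro!: sign_cong)
  ultimately show ?thesis
    using CI by (simp add: pauli_act_def pauli_flip_override)
qed

lemma stabilizer_contract:
  assumes fin: "finite I" and CI: "C \<subseteq> I"
    and s: "s \<in> stabilizer I f" "pauli_restrict C s \<in> pairing_stabilizer"
  shows "pauli_restrict (I - C) s \<in> stabilizer (I - C) (contract f)"
proof -
  obtain c where c: "pauli_act I s f = (\<lambda>t. c * f t)"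
    using s(1) by (rule stabilizerE)
  have "pauli_act (I - C) s (contract f) t = c * contract f t" for t
  proof -
    let ?g = "\<lambda>a t'. f (override_on t' a C)"
    have "c * contract f t = (\<Sum>a\<in>paired_assignments. pauli_act I s f (override_on t a C))"
      unfolding contract_def sum_distrib_left c by simp
    also have "\<dots> = (\<Sum>a\<in>paired_assignments. pauli_act (I - C) s (?g (pauli_flip C s a)) t)"
      using pauli_act_override_paired[OF fin CI s(2)] by (intro sum.cong) simp_all
    also have "\<dots> = (\<Sum>a\<in>paired_assignments. pauli_act (I - C) s (?g a) t)"
      by (rule sum.reindex_bij_betw[OF bij_betw_pauli_flip_paired[OF s(2)]])
    also have "\<dots> = pauli_act (I - C) s (contract f) t"
      by (simp add: pauli_act_def contract_def sum_distrib_left)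
    finally show ?thesis
      by simp
  qed
  then show ?thesis
    using s(1) by (auto simp: stabilizer_def pauli_act_restrict pauli_restrict_paulis_on)
qed

theorem lagrangian_stabilized_contract:
  assumes fin: "finite I" and CI: "C \<subseteq> I" and f: "lagrangian_stabilized I f"
  shows "lagrangian_stabilized (I - C) (contract f)"
proof -
  obtain S where S: "lagrangian I S" "S \<subseteq> stabilizer I f"
    using f by (auto simp: lagrangian_stabilized_def)
  let ?W = "{p \<in> paulis_on I. pauli_restrict C p \<in> pairing_stabilizer}"
  have "lagrangian (I - C) (pauli_restrict (I - C) ` (S \<inter> ?W))"
    by (rule lagrangian_reduction[OF fin CI lagrangian_pairing_stabilizer S(1)])
  moreover have "pauli_restrict (I - C) ` (S \<inter> ?W) \<subseteq> stabilizer (I - C) (contract f)"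
    using stabilizer_contract[OF fin CI] S(2) by auto
  ultimately show ?thesis
    by (auto simp: lagrangian_stabilized_def)
qed

end

section \<open>The cylindrical network\<close>

lemma stabilizer_tensor_51_lagrangian_stabilized:
  assumes "stabilizer_tensor_51 A"
  shows "lagrangian_stabilized {0..<5} (\<lambda>t :: nat \<Rightarrow> bool. A (t 0) (t 1) (t 2) (t 3) (t 4))"
    (is "lagrangian_stabilized _ ?f")
proof -
  have stab_eq: "{p \<in> paulis 5. \<exists>c. \<forall>t. pauli_apply 5 p ?f t = c * ?f t} = stabilizer {0..<5} ?f"
    by (simp add: stabilizer_def paulis_eq_paulis_on pauli_apply_eq_pauli_act)
  obtain t0 where t0: "?f t0 \<noteq> 0"
    using assms by (auto simp: stabilizer_tensor_51_def stabilizer_state_def)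
  have "card (stabilizer {0..<5} ?f) = 2 ^ 5"
    using assms unfolding stabilizer_tensor_51_def stabilizer_state_def stab_eq by simp
  then have "lagrangian {0..<5} (stabilizer {0..<5} ?f)"
    using stabilizer_subgroup stabilizer_isotropic[where f="?f", OF t0]
    by (intro lagrangian_if_card) (auto simp: card_paulis_on)
  then show ?thesis
    by (auto simp: lagrangian_stabilized_def)
qed

text \<open>Leg \<open>(i, j, l)\<close> is argument \<open>l\<close> of the copy of \<open>A\<close> at site \<open>(i, j)\<close>, with \<open>s, u, d, l, r\<close>
  numbered \<open>0, \<dots>, 4\<close>.\<close>
definition legs :: "(nat \<times> nat) set \<Rightarrow> (nat \<times> nat \<times> nat) set" where
  "legs K = {(i, j, l). (i, j) \<in> K \<and> l < 5}"

definition site_tensor :: "tensor \<Rightarrow> nat \<Rightarrow> nat \<Rightarrow> (nat \<times> nat \<times> nat) qstate" where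
  "site_tensor A i j t =
     complex_of_real (1 / sqrt 2) *
     A (t (i, j, 0)) (t (i, j, 1)) (t (i, j, 2)) (t (i, j, 3)) (t (i, j, 4))"

definition network_tensor :: "tensor \<Rightarrow> (nat \<times> nat) set \<Rightarrow> (nat \<times> nat \<times> nat) qstate" where
  "network_tensor A K t = (\<Prod>(i, j)\<in>K. site_tensor A i j t)"

lemma finite_legs: "finite K \<Longrightarrow> finite (legs K)"
proof -
  assume "finite K"
  moreover have "legs K = (\<lambda>((i, j), l). (i, j, l)) ` (K \<times> {0..<5})"
    by (force simp: legs_def)
  ultimately show ?thesis
    by simp
qed

lemma lagrangian_stabilized_site:
  assumes "stabilizer_tensor_51 A"
  shows "lagrangian_stabilized (legs {(i, j)}) (site_tensor A i j)"
proof -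
  have inj: "inj_on (\<lambda>l. (i, j, l)) {0..<(5::nat)}"
    by (auto simp: inj_on_def)
  have legs: "legs {(i, j)} = (\<lambda>l. (i, j, l)) ` {0..<5}"
    by (auto simp: legs_def)
  have site: "site_tensor A i j = (\<lambda>t. complex_of_real (1 / sqrt 2) *
      (\<lambda>t. A (t 0) (t 1) (t 2) (t 3) (t 4)) (t \<circ> (\<lambda>l. (i, j, l))))"
    unfolding site_tensor_def comp_def by (rule refl)
  show ?thesis
    unfolding legs site
    by (intro lagrangian_stabilized_scale lagrangian_stabilized_relabel[OF _ inj]
        stabilizer_tensor_51_lagrangian_stabilized[OF assms]) (auto simp: depends_only_on_def)
qed

lemma depends_only_on_network: "depends_only_on (legs K) (network_tensor A K)"
  unfolding depends_only_on_def network_tensor_def site_tensor_def legs_def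
  by (auto intro!: prod.cong)

lemma lagrangian_stabilized_network:
  assumes "stabilizer_tensor_51 A" "finite K"
  shows "lagrangian_stabilized (legs K) (network_tensor A K)"
  using assms(2)
proof (induction K rule: finite_induct)
  case empty
  have "paulis_on {} = {pauli_one}"
    by (auto simp: paulis_on_def pauli_one_def)
  then have "lagrangian {} {pauli_one}"
    by (auto simp: lagrangian_def pauli_subgroup_def commutant_def)
  moreover have "{pauli_one} \<subseteq> stabilizer {} (\<lambda>_. 1)"
    by (auto simp: stabilizer_def intro: exI[of _ 1])
  moreover have "legs {} = {}" "network_tensor A {} = (\<lambda>_. 1)"
    by (auto simp: legs_def network_tensor_def)
  ultimately show ?case
    unfolding lagrangian_stabilized_def by auto
next
  case (insert x K)
  obtain i j where x: "x = (i, j)"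
    by (cases x)
  have "legs {(i, j)} \<inter> legs K = {}" "legs (insert x K) = legs {(i, j)} \<union> legs K"
    using insert(2) x by (auto simp: legs_def)
  moreover have "network_tensor A (insert x K) = (\<lambda>t. site_tensor A i j t * network_tensor A K t)"
    using insert(1,2) x by (simp add: network_tensor_def fun_eq_iff)
  moreover have "depends_only_on (legs {(i, j)}) (site_tensor A i j)"
    by (auto simp: depends_only_on_def site_tensor_def legs_def)
  ultimately show ?case
    using insert(1,3) lagrangian_stabilized_site[OF assms(1)] finite_legs depends_only_on_network
    by (auto intro!: lagrangian_stabilized_mult)
qed

definition grid :: "nat \<Rightarrow> nat \<Rightarrow> (nat \<times> nat) set" where
  "grid n d = {0..<n} \<times> {0..<d}"

definition inner_hbonds :: "nat \<Rightarrow> nat \<Rightarrow> (nat \<times> nat) set" where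
  "inner_hbonds n d = {0..<n} \<times> {1..<d}"

definition boundary_legs :: "nat \<Rightarrow> nat \<Rightarrow> (nat \<times> nat \<times> nat) set" where
  "boundary_legs n d = {(i, j, l). i < n \<and> (j = 0 \<and> l = 3 \<or> j = d - 1 \<and> l = 4)}"

definition contracted_legs :: "nat \<Rightarrow> nat \<Rightarrow> (nat \<times> nat \<times> nat) set" where
  "contracted_legs n d = legs (grid n d) - boundary_legs n d"

definition physical_legs :: "nat \<Rightarrow> nat \<Rightarrow> (nat \<times> nat \<times> nat) set" where
  "physical_legs n d = {(i, j, 0) | i j. i < n \<and> j < d}"

definition partner_leg :: "nat \<Rightarrow> nat \<times> nat \<times> nat \<Rightarrow> nat \<times> nat \<times> nat" where
  "partner_leg n = (\<lambda>(i, j, l).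
     if l = 1 then ((i + 1) mod n, j, 2) else if l = 2 then ((i + n - 1) mod n, j, 1)
     else if l = 3 then (i, j - 1, 4) else if l = 4 then (i, j + 1, 3) else (i, j, l))"

lemma contracted_legs_iff:
  "(i, j, l) \<in> contracted_legs n d \<longleftrightarrow> i < n \<and> j < d \<and> l < 5 \<and> \<not> (j = 0 \<and> l = 3) \<and> \<not> (j = d - 1 \<and> l = 4)"
  by (auto simp: contracted_legs_def legs_def grid_def boundary_legs_def)

lemma mod_Suc_pred: "i < n \<Longrightarrow> (Suc i mod n + n - Suc 0) mod n = i"
  by (cases "Suc i = n") auto

lemma mod_pred_Suc: "i < n \<Longrightarrow> Suc ((i + n - Suc 0) mod n) mod n = i"
  by (cases i) (auto simp: mod_Suc)

global_interpretation peps: leg_pairing "contracted_legs n d" "physical_legs n d" "partner_leg n" for n d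
proof
  show "finite (contracted_legs n d)"
    unfolding contracted_legs_def by (auto intro: finite_legs simp: grid_def)
  show "physical_legs n d \<subseteq> contracted_legs n d"
    by (auto simp: physical_legs_def contracted_legs_iff)
  fix x
  assume "x \<in> contracted_legs n d - physical_legs n d"
  then show "partner_leg n x \<in> contracted_legs n d - physical_legs n d \<and> partner_leg n x \<noteq> x
    \<and> partner_leg n (partner_leg n x) = x"
    by (cases x)
      (auto simp: contracted_legs_iff physical_legs_def partner_leg_def mod_Suc_pred mod_pred_Suc)
qed

text \<open>The values on the legs in the summand of \<open>peps_state\<close> indexed by \<open>(Sp, V, H)\<close>.\<close>
fun leg_values :: "nat \<Rightarrow> nat \<Rightarrow> (nat \<Rightarrow> bool) \<Rightarrow> (nat \<Rightarrow> bool) \<Rightarrow>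
    (nat \<times> nat) set \<times> (nat \<times> nat) set \<times> (nat \<times> nat) set \<Rightarrow> nat \<times> nat \<times> nat \<Rightarrow> bool" where
  "leg_values n d l r (Sp, V, H) (i, j, k) =
     (let hb = (\<lambda>i j. if j = 0 then l i else if j = d then r i else (i, j) \<in> H) in
      if k = 0 then (i, j) \<in> Sp else if k = 1 then (i, j) \<in> V
      else if k = 2 then ((i + n - 1) mod n, j) \<in> V else if k = 3 then hb i j else hb i (j + 1))"

definition bond_config :: "nat \<Rightarrow> nat \<Rightarrow> (nat \<times> nat \<times> nat \<Rightarrow> bool) \<Rightarrow>
    (nat \<times> nat) set \<times> (nat \<times> nat) set \<times> (nat \<times> nat) set" where
  "bond_config n d a =
     ({(i, j) \<in> grid n d. a (i, j, 0)}, {(i, j) \<in> grid n d. a (i, j, 1)},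
      {(i, j) \<in> inner_hbonds n d. a (i, j, 3)})"

lemma peps_state_eq_sum:
  "peps_state A n d l r = (\<Sum>\<sigma>\<in>Pow (grid n d) \<times> Pow (grid n d) \<times> Pow (inner_hbonds n d).
     network_tensor A (grid n d) (leg_values n d l r \<sigma>))"
  unfolding peps_state_def network_tensor_def site_tensor_def grid_def inner_hbonds_def
    sum.cartesian_product
  by (intro sum.cong refl) (auto simp: Let_def split: prod.splits intro!: prod.cong)

lemma leg_values_partner:
  "x \<in> contracted_legs n d - physical_legs n d \<Longrightarrow>
    leg_values n d l r \<sigma> (partner_leg n x) = leg_values n d l r \<sigma> x"
  by (cases \<sigma>; cases x) (auto simp: contracted_legs_iff physical_legs_def partner_leg_def mod_Suc_pred)

lemma bond_config_leg_values:
  assumes "\<sigma> \<in> Pow (grid n d) \<times> Pow (grid n d) \<times> Pow (inner_hbonds n d)"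
  shows "bond_config n d (\<lambda>x. x \<in> contracted_legs n d \<and> leg_values n d l r \<sigma> x) = \<sigma>"
  using assms by (cases \<sigma>) (auto simp: bond_config_def contracted_legs_iff grid_def inner_hbonds_def)

lemma leg_values_bond_config:
  assumes a: "a \<in> peps.paired_assignments n d"
  shows "(\<lambda>x. x \<in> contracted_legs n d \<and> leg_values n d l r (bond_config n d a) x) = a"
proof
  fix x :: "nat \<times> nat \<times> nat"
  obtain i j k where x: "x = (i, j, k)"
    by (cases x)
  have off: "\<not> a y" if "y \<notin> contracted_legs n d" for y
    using a that unfolding peps.paired_assignments_def by blast
  have paired: "a (partner_leg n y) = a y" if "y \<in> contracted_legs n d - physical_legs n d" for y
    using a that by (simp add: peps.paired_assignments_def)
  show "(x \<in> contracted_legs n d \<and> leg_values n d l r (bond_config n d a) x) = a x"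
  proof (cases "x \<in> contracted_legs n d")
    case True
    then have ijk: "i < n" "j < d" "k < 5" "\<not> (j = 0 \<and> k = 3)" "\<not> (j = d - 1 \<and> k = 4)"
      by (simp_all add: x contracted_legs_iff)
    have "k = 0 \<or> k = 1 \<or> k = 2 \<or> k = 3 \<or> k = 4"
      using ijk by auto
    moreover have "a (partner_leg n x) = a x" if "k \<noteq> 0"
      using True that by (intro paired) (simp add: x physical_legs_def)
    ultimately show ?thesis
      using True ijk
      by (auto simp: x bond_config_def grid_def inner_hbonds_def partner_leg_def)
  qed (use off in auto)
qed

lemma bij_betw_leg_values:
  "bij_betw (\<lambda>\<sigma> x. x \<in> contracted_legs n d \<and> leg_values n d l r \<sigma> x)
     (Pow (grid n d) \<times> Pow (grid n d) \<times> Pow (inner_hbonds n d)) (peps.paired_assignments n d)"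
proof (rule bij_betw_byWitness[where f'="bond_config n d"])
  show "(\<lambda>\<sigma> x. x \<in> contracted_legs n d \<and> leg_values n d l r \<sigma> x) `
      (Pow (grid n d) \<times> Pow (grid n d) \<times> Pow (inner_hbonds n d)) \<subseteq> peps.paired_assignments n d"
    using leg_values_partner peps.partner by (auto simp: peps.paired_assignments_def)
  show "bond_config n d ` peps.paired_assignments n d
      \<subseteq> Pow (grid n d) \<times> Pow (grid n d) \<times> Pow (inner_hbonds n d)"
    by (auto simp: bond_config_def)
qed (simp_all add: bond_config_leg_values leg_values_bond_config)

lemma override_leg_values:
  assumes "d \<ge> 1" "x \<in> legs (grid n d)" "l = (\<lambda>i. t (i, 0, 3))" "r = (\<lambda>i. t (i, d - 1, 4))"
  shows "override_on t (\<lambda>y. y \<in> contracted_legs n d \<and> leg_values n d l r \<sigma> y) (contracted_legs n d) x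
    = leg_values n d l r \<sigma> x"
proof -
  obtain i j k where x: "x = (i, j, k)" and "i < n" "j < d" "k < 5"
    using assms(2) by (auto simp: legs_def grid_def)
  moreover from \<open>k < 5\<close> have "k = 0 \<or> k = 1 \<or> k = 2 \<or> k = 3 \<or> k = 4"
    by arith
  ultimately show ?thesis
    using assms(1,3,4) by (cases \<sigma>) (auto simp: override_on_def contracted_legs_iff)
qed

lemma contract_network_tensor:
  assumes "d \<ge> 1"
  shows "peps.contract n d (network_tensor A (grid n d)) t
    = peps_state A n d (\<lambda>i. t (i, 0, 3)) (\<lambda>i. t (i, d - 1, 4))"
proof -
  let ?l = "\<lambda>i. t (i, 0, 3)" and ?r = "\<lambda>i. t (i, d - 1, 4)"
  let ?\<Sigma> = "Pow (grid n d) \<times> Pow (grid n d) \<times> Pow (inner_hbonds n d)"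
  let ?f = "network_tensor A (grid n d)"
  have "peps.contract n d ?f t = (\<Sum>\<sigma>\<in>?\<Sigma>.
      ?f (override_on t (\<lambda>x. x \<in> contracted_legs n d \<and> leg_values n d ?l ?r \<sigma> x) (contracted_legs n d)))"
    unfolding peps.contract_def by (rule sum.reindex_bij_betw[OF bij_betw_leg_values, symmetric])
  also have "\<dots> = (\<Sum>\<sigma>\<in>?\<Sigma>. ?f (leg_values n d ?l ?r \<sigma>))"
    by (intro sum.cong refl depends_only_onD[OF depends_only_on_network] override_leg_values assms)
  also have "\<dots> = peps_state A n d ?l ?r"
    by (rule peps_state_eq_sum[symmetric])
  finally show ?thesis .
qed

definition register_index :: "nat \<Rightarrow> nat \<times> nat \<times> nat \<Rightarrow> nat" where
  "register_index n x = (if snd (snd x) = 3 then fst x else n + fst x)"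

lemma register_index_bij: "d \<ge> 1 \<Longrightarrow> bij_betw (register_index n) (boundary_legs n d) {0..<2 * n}"
proof (rule bij_betw_imageI)
  show "inj_on (register_index n) (boundary_legs n d)"
    by (auto simp: inj_on_def boundary_legs_def register_index_def)
  assume "d \<ge> 1"
  have cover: "k \<in> register_index n ` boundary_legs n d" if "k < 2 * n" for k
  proof (cases "k < n")
    case True
    then have "(k, 0, 3) \<in> boundary_legs n d"
      by (simp add: boundary_legs_def)
    then show ?thesis
      by (rule rev_image_eqI) (simp add: register_index_def)
  next
    case False
    then have "(k - n, d - 1, 4) \<in> boundary_legs n d"
      using that by (simp add: boundary_legs_def)
    then show ?thesis
      by (rule rev_image_eqI) (use False in \<open>simp add: register_index_def\<close>)
  qed
  have "register_index n ` boundary_legs n d \<subseteq> {0..<2 * n}"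
    by (auto simp: boundary_legs_def register_index_def)
  then show "register_index n ` boundary_legs n d = {0..<2 * n}"
    by (rule equalityI) (auto intro: cover)
qed

theorem lagrangian_stabilized_peps:
  assumes A: "stabilizer_tensor_51 A" and d: "d \<ge> 1"
  shows "lagrangian_stabilized {0..<2 * n} (\<lambda>u. peps_state A n d u (\<lambda>i. u (n + i)))"
proof -
  let ?f = "network_tensor A (grid n d)"
  let ?G = "\<lambda>t. peps_state A n d (\<lambda>i. t (i, 0, 3)) (\<lambda>i. t (i, d - 1, 4))"
  have "finite (grid n d)"
    by (simp add: grid_def)
  then have fin: "finite (legs (grid n d))"
    by (rule finite_legs)
  have bonds: "contracted_legs n d \<subseteq> legs (grid n d)"
    "legs (grid n d) - contracted_legs n d = boundary_legs n d"
    using d by (auto simp: contracted_legs_def boundary_legs_def legs_def grid_def)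
  have G: "peps.contract n d ?f = ?G"
    using contract_network_tensor[OF d] by (simp add: fun_eq_iff)
  have "lagrangian_stabilized (boundary_legs n d) ?G"
    using peps.lagrangian_stabilized_contract[OF fin bonds(1)
        lagrangian_stabilized_network[OF A \<open>finite (grid n d)\<close>]]
    by (simp add: G bonds(2))
  moreover have "depends_only_on (boundary_legs n d) ?G"
    using peps.depends_only_on_contract[OF depends_only_on_network, of "grid n d" n d A]
    by (simp add: G bonds(2))
  moreover have "finite (boundary_legs n d)"
    using fin bonds by (metis finite_Diff)
  ultimately have
    "lagrangian_stabilized (register_index n ` boundary_legs n d) (\<lambda>u. ?G (u \<circ> register_index n))"
    using register_index_bij[OF d]
    by (intro lagrangian_stabilized_relabel) (auto simp: bij_betw_def)
  moreover have "(\<lambda>u. ?G (u \<circ> register_index n)) = (\<lambda>u. peps_state A n d u (\<lambda>i. u (n + i)))"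
    by (simp add: register_index_def fun_eq_iff)
  ultimately show ?thesis
    using register_index_bij[OF d] by (simp add: bij_betw_def)
qed

section \<open>Restriction to the left register\<close>

definition join :: "nat \<Rightarrow> (nat \<Rightarrow> 'a) \<Rightarrow> (nat \<Rightarrow> 'a) \<Rightarrow> nat \<Rightarrow> 'a" where
  "join n f g = (\<lambda>i. if i < n then f i else g (i - n))"

lemma sign_double: "sign {0..<2 * (n::nat)} P = sign {0..<n} P * sign {0..<n} (\<lambda>i. P (n + i))"
proof -
  have "{0..<2 * n} = {0..<n} \<union> (\<lambda>i. n + i) ` {0..<n}"
  proof (intro equalityI subsetI)
    fix k
    assume "k \<in> {0..<2 * n}"
    then show "k \<in> {0..<n} \<union> (\<lambda>i. n + i) ` {0..<n}"
      by (cases "k < n") (auto intro!: image_eqI[where x="k - n"])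
  qed auto
  then have "sign {0..<2 * n} P = sign {0..<n} P * sign ((\<lambda>i. n + i) ` {0..<n}) P"
    by (simp only:) (rule sign_union; auto)
  also have "sign ((\<lambda>i. n + i) ` {0..<n}) P = sign {0..<n} (\<lambda>i. P (n + i))"
    by (rule sign_reindex) (simp add: inj_on_def)
  finally show ?thesis .
qed

lemma pauli_act_join:
  assumes F: "\<And>l l' r r'. (\<And>i. i < n \<Longrightarrow> l i = l' i) \<Longrightarrow> (\<And>i. i < n \<Longrightarrow> r i = r' i) \<Longrightarrow> F l r = F l' r'"
  shows "pauli_act {0..<n} a (\<lambda>l'. pauli_act {0..<n} b (F l') r) l
       = pauli_act {0..<2 * n} (join n a b) (\<lambda>u. F u (\<lambda>i. u (n + i))) (join n l r)"
proof -
  let ?j = "join n a b" and ?u = "join n l r"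
  have "sign {0..<2 * n} (\<lambda>i. snd (?j i) \<and> (?u i \<noteq> fst (?j i)))
      = sign {0..<n} (\<lambda>i. snd (a i) \<and> (l i \<noteq> fst (a i)))
        * sign {0..<n} (\<lambda>i. snd (b i) \<and> (r i \<noteq> fst (b i)))"
    unfolding sign_double by (intro arg_cong2[where f="(*)"] sign_cong) (simp_all add: join_def)
  moreover have "F (pauli_flip {0..<2 * n} ?j ?u) (\<lambda>i. pauli_flip {0..<2 * n} ?j ?u (n + i))
      = F (pauli_flip {0..<n} a l) (pauli_flip {0..<n} b r)"
    by (rule F) (simp_all add: pauli_flip_def join_def)
  ultimately show ?thesis
    by (simp add: pauli_act_def)
qed

lemma peps_state_cong:
  "(\<And>i. i < n \<Longrightarrow> l i = l' i) \<Longrightarrow> (\<And>i. i < n \<Longrightarrow> r i = r' i) \<Longrightarrow>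
    peps_state A n d l r = peps_state A n d l' r'"
  unfolding peps_state_def Let_def by (intro sum.cong refl prod.cong) auto

lemma S_full_iff_stabilizer:
  "(a, b) \<in> S_full A n d \<longleftrightarrow> a \<in> paulis n \<and> b \<in> paulis n \<and>
     join n a b \<in> stabilizer {0..<2 * n} (\<lambda>u. peps_state A n d u (\<lambda>i. u (n + i)))"
proof -
  let ?w = "\<lambda>u. peps_state A n d u (\<lambda>i. u (n + i))"
  let ?act = "pauli_act {0..<2 * n} (join n a b) ?w"
  have act: "pauli_apply n a (\<lambda>l'. pauli_apply n b (peps_state A n d l') r) l = ?act (join n l r)"
    for l r
    unfolding pauli_apply_eq_pauli_act by (rule pauli_act_join) (rule peps_state_cong)
  have w_join: "?w (join n l r) = peps_state A n d l r" for l r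
    by (rule peps_state_cong) (simp_all add: join_def)
  have join_split: "join n u (\<lambda>i. u (n + i)) = u" for u :: "nat \<Rightarrow> bool"
    by (simp add: join_def fun_eq_iff)
  have S_full: "(a, b) \<in> S_full A n d \<longleftrightarrow>
      a \<in> paulis n \<and> b \<in> paulis n \<and> (\<exists>c. \<forall>l r. ?act (join n l r) = c * peps_state A n d l r)"
    by (simp add: S_full_def act)
  have "(\<forall>l r. ?act (join n l r) = c * peps_state A n d l r) \<longleftrightarrow> (\<forall>u. ?act u = c * ?w u)" for c
  proof
    assume "\<forall>l r. ?act (join n l r) = c * peps_state A n d l r"
    then have "?act (join n u (\<lambda>i. u (n + i))) = c * ?w u" for u
      by blast
    then show "\<forall>u. ?act u = c * ?w u"
      by (simp add: join_split)
  qed (simp add: w_join)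
  moreover have "a \<in> paulis n \<Longrightarrow> b \<in> paulis n \<Longrightarrow> join n a b \<in> paulis_on {0..<2 * n}"
    by (auto simp: paulis_def paulis_on_def join_def)
  ultimately show ?thesis
    unfolding S_full stabilizer_def by auto
qed

lemma S_L_eq_restrict_stabilizer:
  "S_L A n d
    = pauli_restrict {0..<n} ` stabilizer {0..<2 * n} (\<lambda>u. peps_state A n d u (\<lambda>i. u (n + i)))"
    (is "_ = pauli_restrict {0..<n} ` ?St")
proof
  show "S_L A n d \<subseteq> pauli_restrict {0..<n} ` ?St"
  proof
    fix a
    assume "a \<in> S_L A n d"
    then obtain b where "a \<in> paulis n" "join n a b \<in> ?St"
      by (auto simp: S_L_def S_full_iff_stabilizer)
    moreover from \<open>a \<in> paulis n\<close> have "pauli_restrict {0..<n} (join n a b) = a"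
      by (auto simp: pauli_restrict_def join_def paulis_def)
    ultimately show "a \<in> pauli_restrict {0..<n} ` ?St"
      by (metis image_eqI)
  qed
  show "pauli_restrict {0..<n} ` ?St \<subseteq> S_L A n d"
  proof (rule image_subsetI)
    fix p
    assume "p \<in> ?St"
    then have p: "p \<in> paulis_on {0..<2 * n}" "p \<in> ?St"
      by (auto simp: stabilizer_def)
    let ?b = "pauli_restrict {0..<n} (\<lambda>i. p (n + i))"
    have "join n (pauli_restrict {0..<n} p) ?b = p"
      using p(1) by (auto simp: join_def pauli_restrict_def paulis_on_def fun_eq_iff)
    then have "(pauli_restrict {0..<n} p, ?b) \<in> S_full A n d"
      using p(2) by (simp add: S_full_iff_stabilizer paulis_eq_paulis_on pauli_restrict_paulis_on)
    then show "pauli_restrict {0..<n} p \<in> S_L A n d"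
      by (force simp: S_L_def)
  qed
qed

text \<open>An \<open>a\<close> on \<open>I\<close> commuting with the restriction of \<open>S\<close> commutes with \<open>S\<close> itself, hence lies in
  \<open>S\<close>: the restriction contains its commutant, which is therefore its centre.\<close>
lemma mem_restrict_lagrangian_iff:
  assumes fin: "finite K" and IK: "I \<subseteq> K" and S: "lagrangian K S" and x: "x \<in> paulis_on I"
  defines "S\<^sub>I \<equiv> pauli_restrict I ` S"
  shows "x \<in> S\<^sub>I \<longleftrightarrow> (\<forall>z \<in> S\<^sub>I \<inter> commutant I S\<^sub>I. symp I x z = 1)"
proof -
  have finI: "finite I"
    using fin IK finite_subset by blast
  have sub: "pauli_subgroup I S\<^sub>I"
    unfolding S\<^sub>I_def using S pauli_restrict_one pauli_restrict_mult pauli_restrict_paulis_on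
    by (intro pauli_subgroup_image) (auto simp: lagrangian_def)
  have "commutant I S\<^sub>I \<subseteq> S\<^sub>I"
  proof
    fix a
    assume a: "a \<in> commutant I S\<^sub>I"
    then have aI: "a \<in> paulis_on I"
      by (simp add: commutant_def)
    have "symp K a s = 1" if "s \<in> S" for s
      using a that symp_superset[OF fin IK aI] symp_restrict_right[of I a s]
      by (auto simp: commutant_def S\<^sub>I_def)
    then have "a \<in> commutant K S"
      using aI paulis_on_mono[OF IK] by (auto simp: commutant_def)
    then have "a \<in> S"
      using S by (simp add: lagrangian_def)
    then show "a \<in> S\<^sub>I"
      unfolding S\<^sub>I_def using pauli_restrict_id[OF aI] by (metis image_eqI)
  qed
  then have "S\<^sub>I \<inter> commutant I S\<^sub>I = commutant I S\<^sub>I"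
    by blast
  moreover have "x \<in> commutant I (commutant I S\<^sub>I) \<longleftrightarrow> (\<forall>z \<in> commutant I S\<^sub>I. symp I x z = 1)"
    using x by (simp add: commutant_def)
  ultimately show ?thesis
    using commutant_commutant[OF finI sub] by simp
qed

theorem corollary1:
  fixes A :: tensor and n d :: nat and x :: "nat \<Rightarrow> bool \<times> bool"
  assumes "stabilizer_tensor_51 A" and "n \<ge> 1" and "d \<ge> 1" and "x \<in> paulis n"
  shows "x \<in> S_L A n d \<longleftrightarrow> (\<forall>z \<in> Z_L A n d. pauli_commute n x z)"
proof -
  define w where "w u = peps_state A n d u (\<lambda>i. u (n + i))" for u
  have SL: "S_L A n d = pauli_restrict {0..<n} ` stabilizer {0..<2 * n} w"
    unfolding w_def by (rule S_L_eq_restrict_stabilizer)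
  have ZL: "Z_L A n d = S_L A n d \<inter> commutant {0..<n} (S_L A n d)"
    unfolding Z_L_def commutant_def SL
    by (auto simp: pauli_commute_iff_symp pauli_restrict_paulis_on)
  have x: "x \<in> paulis_on {0..<n}"
    using assms(4) by (simp add: paulis_eq_paulis_on)
  show ?thesis
  proof (cases "\<exists>u. w u \<noteq> 0")
    case True
    then obtain u where "w u \<noteq> 0"
      by blast
    then have "lagrangian {0..<2 * n} (stabilizer {0..<2 * n} w)"
      unfolding w_def using lagrangian_stabilized_peps[OF assms(1,3)]
      by (intro stabilizer_lagrangian) simp_all
    from mem_restrict_lagrangian_iff[OF _ _ this x] show ?thesis
      unfolding ZL SL by (simp add: pauli_commute_iff_symp)
  next
    case False
    then have "x \<in> stabilizer {0..<2 * n} w"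
      using x paulis_on_mono[of "{0..<n}" "{0..<2 * n}"]
      by (auto simp: stabilizer_def pauli_act_def)
    then have "x \<in> S_L A n d"
      unfolding SL by (rule rev_image_eqI) (simp add: pauli_restrict_id[OF x])
    then show ?thesis
      by (auto simp: ZL commutant_def pauli_commute_iff_symp symp_commute)
  qed
qed

end
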